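(* Let $m\ge1$ and let $Y'^1,\dots,Y'^m$ be independent copies of a (thinned) single-fluorophore detected-photon process $Y'=(Y'_t)_{t=1}^T$ which is itself the photon process of an HTMM with parameters as below; put $Y'^{(m)}_t=\sum_{k=1}^mY'^k_t$. Let $(U_{t,k})_{t,k\ge1}$ be i.i.d. nonnegative random variables, independent of everything else, with mean $u>0$ and finite variance, and set $f^2=\mathrm{Var}[U_{1,1}]/u^2+1$. Let $c>0$, $o\in\mathbb R$, and let $\epsilon_1,\dots,\epsilon_T$ be independent centered random variables with variances $\sigma_t^2$, independent of everything else. Define $E_t=\sum_{k=1}^{Y'^{(m)}_t}U_{t,k}$, $\widetilde Y_t=cE_t+o+\epsilon_t$, and $a=cu$. Under the hypotheses ($0<q_{00}<1$, $\theta_1>0$, finite moment generating functions near $0$, diagonalizable $M=V\Lambda V^{-1}$ with $\lambda_r=1$ and column $r$ of $V$ equal to $e_r$), the normalized process $Z_t=(\widetilde Y_t-o)/a$ has mean and covariance $$\mathbb E[Z_t]=\mu_t:=m\theta_1\sum_{x=0}^{r-1}\alpha_x\lambda_x^{t-1},$$ $$\mathrm{Var}[Z_t]=\frac1m\big(m\theta_1(\theta_3+1)+mf^2-\mu_t\big)\mu_t+\frac{\sigma_t^2}{a^2},$$ $$\mathrm{Cov}(Z_t,Z_{t'})=\frac1m\left[\Big(\theta_2-q_{00}\frac{1-\theta_2}{1-q_{00}}\Big)\mu^0_{t-t'}+\frac{1-\theta_2}{1-q_{00}}\mu^0_{t-t'+1}-\mu_t\right]\mu_{t'}\quad(1\le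 t'<t\le T),$$ where $\mu^0_k=m\theta_1\sum_{x=0}^{r-1}\alpha^0_x\lambda_x^{k-1}$.
   Context: HTMM: fix $r\ge1$, $T\ge1$, $\mathcal S=\{0,\dots,r\}$; $q_{xz}\in[0,1]$ ($x\in\mathcal S$, $0\le z\le r-1$) with $\sum_xq_{xz}=1$; column-stochastic $M^\ell$ with column $0$ equal to $e_0$, column $r$ equal to $e_r$, $M^\ell_{xz}=q_{xz}$ for $1\le z\le r-1$; $M^s$ with column $0$ equal to $(q_{00},\dots,q_{r0})^{\mathrm T}$ and $M^s_{xz}=\delta_{xz}$ for $z\ge1$; $M=M^sM^\ell$. $p_{00},p_{10}$ are distributions on $\mathbb N_0$, $p_{x0}:=p_{10}$ for $x\ge1$, $p_{xx'}:=\delta_0$ for $x'\neq0$; $\nu$ a probability vector. The single-fluorophore process $(X_0,X'_1,X_1,Y'_1,\dots)$ has joint law $\nu_{x_0}\prod_{t}M^\ell_{x'_tx_{t-1}}M^s_{x_tx'_t}p_{x_tx'_t}(y_t)$. Parameters (for this detected-photon process): $\theta_1=\mathbb E[Y'_t\mid X'_t=0]$, $\theta_2=q_{00}\mathbb E[Y'_t\mid X'_t=X_t=0]/\theta_1$, $\theta_3=\mathrm{Var}[Y'_t\mid X'_t=0]/\theta_1^2-1/\theta_1$. Coefficients: $\alpha_x=V_{0x}\frac{\lambda_x}{q_{00}}\sum_z(V^{-1})_{xz}\nu_z$, $\alpha^0_x=\frac{\lambda_x}{q_{00}}V_{0x}(V^{-1})_{x0}$ (note $\alpha_r=\alpha^0_r=0$).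 Convention $0^0=1$. *)

theory Defs
  imports "HOL-Probability.Probability"
begin

text \<open>Transition matrices of the HTMM (indices 0..r); q x z given for 0 <= z <= r-1.\<close>

definition Ml :: "nat \<Rightarrow> (nat \<Rightarrow> nat \<Rightarrow> real) \<Rightarrow> nat \<Rightarrow> nat \<Rightarrow> real" where
  "Ml r q x z = (if z = 0 then (if x = 0 then 1 else 0)
                 else if z = r then (if x = r then 1 else 0) else q x z)"

definition Ms :: "(nat \<Rightarrow> nat \<Rightarrow> real) \<Rightarrow> nat \<Rightarrow> nat \<Rightarrow> real" where
  "Ms q x z = (if z = 0 then q x 0 else if x = z then 1 else 0)"

definition Mmat :: "nat \<Rightarrow> (nat \<Rightarrow> nat \<Rightarrow> real) \<Rightarrow> nat \<Rightarrow> nat \<Rightarrow> real" where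
  "Mmat r q x z = (\<Sum>y\<le>r. Ms q x y * Ml r q y z)"

definition emis :: "nat pmf \<Rightarrow> nat pmf \<Rightarrow> nat \<Rightarrow> nat \<Rightarrow> nat pmf" where
  "emis p00 p10 x x' = (if x' = 0 then (if x = 0 then p00 else p10) else return_pmf 0)"

definition pmf_mean :: "nat pmf \<Rightarrow> real" where
  "pmf_mean p = measure_pmf.expectation p real"

definition pmf_mom2 :: "nat pmf \<Rightarrow> real" where
  "pmf_mom2 p = measure_pmf.expectation p (\<lambda>n. (real n)\<^sup>2)"

definition mgf_finite_near0 :: "nat pmf \<Rightarrow> bool" where
  "mgf_finite_near0 p \<longleftrightarrow> (\<exists>\<delta>>0. \<forall>s. \<bar>s\<bar> < \<delta> \<longrightarrow> summable (\<lambda>n. pmf p n * exp (s * real n)))"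

text \<open>Parameters: the conditional law of Y'_t given X'_t = 0 is the mixture of
  p_{x0} with weights M^s_{x0} = q_{x0} (law of X_t given X'_t = 0).\<close>

definition theta1 :: "nat \<Rightarrow> (nat \<Rightarrow> nat \<Rightarrow> real) \<Rightarrow> nat pmf \<Rightarrow> nat pmf \<Rightarrow> real" where
  "theta1 r q p00 p10 = (\<Sum>x\<le>r. Ms q x 0 * pmf_mean (emis p00 p10 x 0))"

definition theta2 :: "nat \<Rightarrow> (nat \<Rightarrow> nat \<Rightarrow> real) \<Rightarrow> nat pmf \<Rightarrow> nat pmf \<Rightarrow> real" where
  "theta2 r q p00 p10 = q 0 0 * pmf_mean (emis p00 p10 0 0) / theta1 r q p00 p10"

definition theta3 :: "nat \<Rightarrow> (nat \<Rightarrow> nat \<Rightarrow> real) \<Rightarrow> nat pmf \<Rightarrow> nat pmf \<Rightarrow> real" where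
  "theta3 r q p00 p10 =
     ((\<Sum>x\<le>r. Ms q x 0 * pmf_mom2 (emis p00 p10 x 0)) - (theta1 r q p00 p10)\<^sup>2)
        / (theta1 r q p00 p10)\<^sup>2 - 1 / theta1 r q p00 p10"

definition alpha :: "nat \<Rightarrow> (nat \<Rightarrow> nat \<Rightarrow> complex) \<Rightarrow> (nat \<Rightarrow> nat \<Rightarrow> complex) \<Rightarrow> (nat \<Rightarrow> complex)
                     \<Rightarrow> (nat \<Rightarrow> nat \<Rightarrow> real) \<Rightarrow> (nat \<Rightarrow> real) \<Rightarrow> nat \<Rightarrow> complex" where
  "alpha r V Vinv lam q \<nu> x =
     V 0 x * (lam x / complex_of_real (q 0 0)) * (\<Sum>z\<le>r. Vinv x z * complex_of_real (\<nu> z))"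

definition alpha0 :: "(nat \<Rightarrow> nat \<Rightarrow> complex) \<Rightarrow> (nat \<Rightarrow> nat \<Rightarrow> complex) \<Rightarrow> (nat \<Rightarrow> complex)
                     \<Rightarrow> (nat \<Rightarrow> nat \<Rightarrow> real) \<Rightarrow> nat \<Rightarrow> complex" where
  "alpha0 V Vinv lam q x = (lam x / complex_of_real (q 0 0)) * V 0 x * Vinv x 0"

definition mu_of :: "nat \<Rightarrow> nat \<Rightarrow> real \<Rightarrow> (nat \<Rightarrow> complex) \<Rightarrow> (nat \<Rightarrow> complex) \<Rightarrow> nat \<Rightarrow> complex" where
  "mu_of r m th1 coef lam t = of_nat m * complex_of_real th1 * (\<Sum>x<r. coef x * lam x ^ (t - 1))"

definition photon_sum :: "(nat \<Rightarrow> nat \<Rightarrow> 'a \<Rightarrow> nat) \<Rightarrow> nat \<Rightarrow> nat \<Rightarrow> 'a \<Rightarrow> nat" where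
  "photon_sum Yp m t \<omega> = (\<Sum>k\<in>{1..m}. Yp k t \<omega>)"

definition Eproc :: "(nat \<Rightarrow> nat \<Rightarrow> 'a \<Rightarrow> real) \<Rightarrow> (nat \<Rightarrow> nat \<Rightarrow> 'a \<Rightarrow> nat) \<Rightarrow> nat \<Rightarrow> nat \<Rightarrow> 'a \<Rightarrow> real" where
  "Eproc U Yp m t \<omega> = (\<Sum>k\<in>{1..photon_sum Yp m t \<omega>}. U t k \<omega>)"

definition Ytilde :: "real \<Rightarrow> real \<Rightarrow> (nat \<Rightarrow> nat \<Rightarrow> 'a \<Rightarrow> real) \<Rightarrow> (nat \<Rightarrow> 'a \<Rightarrow> real)
                     \<Rightarrow> (nat \<Rightarrow> nat \<Rightarrow> 'a \<Rightarrow> nat) \<Rightarrow> nat \<Rightarrow> nat \<Rightarrow> 'a \<Rightarrow> real" where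
  "Ytilde c ofs U eps Yp m t \<omega> = c * Eproc U Yp m t \<omega> + ofs + eps t \<omega>"

definition Zproc :: "real \<Rightarrow> real \<Rightarrow> real \<Rightarrow> (nat \<Rightarrow> nat \<Rightarrow> 'a \<Rightarrow> real) \<Rightarrow> (nat \<Rightarrow> 'a \<Rightarrow> real)
                     \<Rightarrow> (nat \<Rightarrow> nat \<Rightarrow> 'a \<Rightarrow> nat) \<Rightarrow> nat \<Rightarrow> nat \<Rightarrow> 'a \<Rightarrow> real" where
  "Zproc c u ofs U eps Yp m t \<omega> = (Ytilde c ofs U eps Yp m t \<omega> - ofs) / (c * u)"

text \<open>Sources of randomness, for stating mutual independence.\<close>
datatype src = Fluo nat | Unoise nat nat | Enoise nat

definition fluo_gen :: "'a measure \<Rightarrow> nat \<Rightarrow> (nat \<Rightarrow> nat \<Rightarrow> 'a \<Rightarrow> nat) \<Rightarrow> (nat \<Rightarrow> nat \<Rightarrow> 'a \<Rightarrow> nat)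
                        \<Rightarrow> (nat \<Rightarrow> nat \<Rightarrow> 'a \<Rightarrow> nat) \<Rightarrow> nat \<Rightarrow> 'a set set" where
  "fluo_gen M T X Xp Yp k =
     (\<Union>t\<in>{0..T}. {X k t -` A \<inter> space M | A. True})
     \<union> (\<Union>t\<in>{1..T}. {Xp k t -` A \<inter> space M | A. True} \<union> {Yp k t -` A \<inter> space M | A. True})"

definition src_sigma :: "'a measure \<Rightarrow> nat \<Rightarrow> (nat \<Rightarrow> nat \<Rightarrow> 'a \<Rightarrow> nat) \<Rightarrow> (nat \<Rightarrow> nat \<Rightarrow> 'a \<Rightarrow> nat)
                        \<Rightarrow> (nat \<Rightarrow> nat \<Rightarrow> 'a \<Rightarrow> nat) \<Rightarrow> (nat \<Rightarrow> nat \<Rightarrow> 'a \<Rightarrow> real) \<Rightarrow> (nat \<Rightarrow> 'a \<Rightarrow> real)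
                        \<Rightarrow> src \<Rightarrow> 'a set set" where
  "src_sigma M T X Xp Yp U eps i = (case i of
       Fluo k \<Rightarrow> sigma_sets (space M) (fluo_gen M T X Xp Yp k)
     | Unoise t k \<Rightarrow> {U t k -` A \<inter> space M | A. A \<in> sets borel}
     | Enoise t \<Rightarrow> {eps t -` A \<inter> space M | A. A \<in> sets borel})"

definition src_index :: "nat \<Rightarrow> nat \<Rightarrow> src set" where
  "src_index m T = Fluo ` {1..m} \<union> {Unoise t k | t k. 1 \<le> t \<and> 1 \<le> k} \<union> Enoise ` {1..T}"

definition covar :: "'a measure \<Rightarrow> ('a \<Rightarrow> real) \<Rightarrow> ('a \<Rightarrow> real) \<Rightarrow> real" where
  "covar M X Y = integral\<^sup>L M (\<lambda>\<omega>. (X \<omega> - integral\<^sup>L M X) * (Y \<omega> - integral\<^sup>L M Y))"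

end

theory Submission
  imports Defs
begin

text \<open>Conditionally on the hidden path, a fluorophore emits independent photon counts, so every
  moment of \<open>Y'\<close> is a sum over paths, which the forward recursion evaluates. Only the state
  \<open>X' = 0\<close> emits, so an emission collapses the recursion to a rank-one step: \<open>E[Y'\<^sub>t]\<close> is
  \<open>\<theta>\<^sub>1 P(X'\<^sub>t = 0)\<close>, and \<open>E[Y'\<^sub>t Y'\<^sub>t\<^sub>']\<close> is \<open>\<theta>\<^sub>1\<close> times the on-probability obtained by running
  \<open>M\<^sup>t\<^sup>-\<^sup>t\<^sup>'\<close> from the post-emission weights at \<open>t'\<close>. Diagonalising \<open>M\<close> turns these into the
  spectral sums \<open>\<mu>\<close> and \<open>\<mu>\<^sup>0\<close>. Amplification enters through a Wald identity: given \<open>n\<close>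
  photons, \<open>E\<^sub>t\<close> is a sum of \<open>n\<close> independent copies of \<open>U\<close>, so the moments of \<open>E\<close> are those of
  the photon count rescaled by \<open>u\<close> and \<open>f\<^sup>2\<close>; the independent read-out noise only adds
  \<open>\<sigma>\<^sub>t\<^sup>2/a\<^sup>2\<close> to the variance.\<close>

section \<open>The forward recursion of the hidden chain\<close>

lemma sum_PiE_insert:
  assumes "a \<notin> A" "finite A" "\<And>i. finite (B i)"
  shows "(\<Sum>f\<in>PiE (insert a A) B. g f) = (\<Sum>b\<in>B a. \<Sum>f\<in>PiE A B. g (f(a:=b)))"
proof -
  have "(\<Sum>f\<in>PiE (insert a A) B. g f) = (\<Sum>p\<in>B a \<times> PiE A B. g ((\<lambda>(y, h). h(a := y)) p))"
    unfolding PiE_insert_eq by (subst sum.reindex[OF inj_combinator[OF assms(1)]]) auto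
  also have "\<dots> = (\<Sum>b\<in>B a. \<Sum>f\<in>PiE A B. g (f(a:=b)))"
    by (simp add: sum.cartesian_product case_prod_unfold)
  finally show ?thesis .
qed

definition forward_step ::
    "nat \<Rightarrow> (nat \<Rightarrow> nat \<Rightarrow> real) \<Rightarrow> (nat \<Rightarrow> nat \<Rightarrow> real) \<Rightarrow> (nat \<Rightarrow> real) \<Rightarrow> nat \<Rightarrow> real" where
  "forward_step r q \<phi> v z = (\<Sum>y\<le>r. \<Sum>x'\<le>r. v y * (Ml r q x' y * Ms q z x' * \<phi> z x'))"

fun forward ::
    "nat \<Rightarrow> (nat \<Rightarrow> nat \<Rightarrow> real) \<Rightarrow> (nat \<Rightarrow> nat \<Rightarrow> nat \<Rightarrow> real) \<Rightarrow> (nat \<Rightarrow> real) \<Rightarrow> nat \<Rightarrow> nat \<Rightarrow> real" where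
  "forward r q \<Phi> v 0 = v"
| "forward r q \<Phi> v (Suc n) = forward_step r q (\<Phi> (Suc n)) (forward r q \<Phi> v n)"

text \<open>With trivial emission weights the recursion is the action of \<open>M\<^sup>n\<close>.\<close>

abbreviation Mpow :: "nat \<Rightarrow> (nat \<Rightarrow> nat \<Rightarrow> real) \<Rightarrow> nat \<Rightarrow> (nat \<Rightarrow> real) \<Rightarrow> nat \<Rightarrow> real" where
  "Mpow r q n v \<equiv> forward r q (\<lambda>_ _ _. 1) v n"

lemma sum_paths_forward:
  "(\<Sum>xs\<in>PiE {..n} (\<lambda>_. {..r}). \<Sum>xps\<in>PiE {1..n} (\<lambda>_. {..r}).
      v (xs 0) * (\<Prod>t\<in>{1..n}. Ml r q (xps t) (xs (t-1)) * Ms q (xs t) (xps t) * \<Phi> t (xs t) (xps t)) * f (xs n))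
   = (\<Sum>z\<le>r. forward r q \<Phi> v n z * f z)"
proof (induction n arbitrary: f)
  case 0
  have "{..0::nat} = insert 0 {}" by auto
  then show ?case by (simp add: sum_PiE_insert)
next
  case (Suc n)
  let ?G = "\<lambda>t y x' z. Ml r q x' y * Ms q z x' * \<Phi> t z x'"
  let ?W = "\<lambda>xs xps. v (xs 0) * (\<Prod>t\<in>{1..n}. ?G t (xs (t-1)) (xps t) (xs t))"
  have e1: "{..Suc n} = insert (Suc n) {..n}" and e2: "{1..Suc n} = insert (Suc n) {1..n}" by auto
  have last_factor: "(\<Prod>t\<in>{1..Suc n}. ?G t ((xs(Suc n := z)) (t-1)) ((xps(Suc n := x')) t) ((xs(Suc n := z)) t))
       = ?G (Suc n) (xs n) x' z * (\<Prod>t\<in>{1..n}. ?G t (xs (t-1)) (xps t) (xs t))" for xs xps z x'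
    unfolding e2 by (subst prod.insert) (auto intro!: prod.cong)
  have "(\<Sum>xs\<in>PiE {..Suc n} (\<lambda>_. {..r}). \<Sum>xps\<in>PiE {1..Suc n} (\<lambda>_. {..r}).
      v (xs 0) * (\<Prod>t\<in>{1..Suc n}. ?G t (xs (t-1)) (xps t) (xs t)) * f (xs (Suc n)))
    = (\<Sum>z\<le>r. \<Sum>xs\<in>PiE {..n} (\<lambda>_. {..r}). \<Sum>x'\<le>r. \<Sum>xps\<in>PiE {1..n} (\<lambda>_. {..r}).
      v ((xs(Suc n := z)) 0) * (\<Prod>t\<in>{1..Suc n}. ?G t ((xs(Suc n := z)) (t-1)) ((xps(Suc n := x')) t) ((xs(Suc n := z)) t)) * f z)"
    unfolding e1 e2 by (simp add: sum_PiE_insert)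
  also have "\<dots> = (\<Sum>z\<le>r. \<Sum>x'\<le>r. \<Sum>xs\<in>PiE {..n} (\<lambda>_. {..r}). \<Sum>xps\<in>PiE {1..n} (\<lambda>_. {..r}).
      ?W xs xps * (?G (Suc n) (xs n) x' z * f z))"
    by (intro sum.cong refl, subst sum.swap, intro sum.cong refl, subst last_factor) (simp add: mult_ac)
  also have "\<dots> = (\<Sum>z\<le>r. \<Sum>x'\<le>r. \<Sum>y\<le>r. forward r q \<Phi> v n y * (?G (Suc n) y x' z * f z))"
    by (intro sum.cong refl) (rule Suc.IH)
  also have "\<dots> = (\<Sum>z\<le>r. forward r q \<Phi> v (Suc n) z * f z)"
    by (intro sum.cong refl, subst sum.swap)
       (simp add: forward_step_def sum_distrib_left sum_distrib_right mult_ac)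
  finally show ?case by simp
qed

lemma Ml_nonneg:
  assumes "\<And>x z. x \<le> r \<Longrightarrow> z \<le> r - 1 \<Longrightarrow> 0 \<le> q x z \<and> q x z \<le> 1" "x \<le> r" "y \<le> r"
  shows "0 \<le> Ml r q x y"
  using assms unfolding Ml_def by auto

lemma Ms_nonneg:
  assumes "\<And>x z. x \<le> r \<Longrightarrow> z \<le> r - 1 \<Longrightarrow> 0 \<le> q x z \<and> q x z \<le> 1" "z \<le> r"
  shows "0 \<le> Ms q z x'"
  using assms unfolding Ms_def by auto

lemma Ml_column_sum:
  assumes "\<And>z. z \<le> r - 1 \<Longrightarrow> (\<Sum>x\<le>r. q x z) = 1" "y \<le> r"
  shows "(\<Sum>x'\<le>r. Ml r q x' y) = 1"
proof -
  have "(\<Sum>x'\<le>r. Ml r q x' y) = (if y = 0 then (\<Sum>x'\<le>r. if x' = 0 then 1 else 0)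
        else if y = r then (\<Sum>x'\<le>r. if x' = r then 1 else 0) else (\<Sum>x'\<le>r. q x' y))"
    unfolding Ml_def by auto
  also have "\<dots> = 1" using assms by (auto simp: sum.delta)
  finally show ?thesis .
qed

lemma Ms_column_sum:
  assumes "\<And>z. z \<le> r - 1 \<Longrightarrow> (\<Sum>x\<le>r. q x z) = 1" "x' \<le> r"
  shows "(\<Sum>z\<le>r. Ms q z x') = 1"
proof (cases "x' = 0")
  case True then show ?thesis using assms(1)[of 0] by (simp add: Ms_def)
next
  case False
  then have "(\<Sum>z\<le>r. Ms q z x') = (\<Sum>z\<le>r. if z = x' then 1 else 0)"
    unfolding Ms_def by (intro sum.cong) auto
  then show ?thesis using assms(2) by (simp add: sum.delta)
qed

lemma Ms_row0: "Ms q 0 x' = (if x' = 0 then q 0 0 else 0)"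
  unfolding Ms_def by auto

lemma Mmat_col0: "Mmat r q w 0 = Ms q w 0"
proof -
  have "Mmat r q w 0 = (\<Sum>y\<le>r. if y = 0 then Ms q w 0 else 0)"
    unfolding Mmat_def Ml_def by (intro sum.cong) auto
  then show ?thesis by (simp add: sum.delta)
qed

lemma forward_step_unit: "forward_step r q (\<lambda>_ _. 1) v z = (\<Sum>y\<le>r. Mmat r q z y * v y)"
  unfolding forward_step_def Mmat_def sum_distrib_right
  by (intro sum.cong refl) (simp add: mult_ac)

lemma forward_step_unit_mass:
  assumes "\<And>z. z \<le> r - 1 \<Longrightarrow> (\<Sum>x\<le>r. q x z) = 1"
  shows "(\<Sum>z\<le>r. forward_step r q (\<lambda>_ _. 1) v z) = (\<Sum>y\<le>r. v y)"
proof -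
  have "(\<Sum>z\<le>r. forward_step r q (\<lambda>_ _. 1) v z)
      = (\<Sum>y\<le>r. \<Sum>z\<le>r. \<Sum>x'\<le>r. v y * (Ml r q x' y * Ms q z x'))"
    unfolding forward_step_def by (simp, rule sum.swap)
  also have "\<dots> = (\<Sum>y\<le>r. \<Sum>x'\<le>r. \<Sum>z\<le>r. v y * (Ml r q x' y * Ms q z x'))"
    by (rule sum.cong[OF refl], rule sum.swap)
  also have "\<dots> = (\<Sum>y\<le>r. v y * (\<Sum>x'\<le>r. Ml r q x' y * (\<Sum>z\<le>r. Ms q z x')))"
    by (simp add: sum_distrib_left)
  also have "\<dots> = (\<Sum>y\<le>r. v y)"
    using assms by (simp add: Ms_column_sum Ml_column_sum)
  finally show ?thesis .
qed

lemma forward_step_unit_0: "forward_step r q (\<lambda>_ _. 1) v 0 = q 0 0 * (\<Sum>y\<le>r. v y * Ml r q 0 y)"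
proof -
  have "forward_step r q (\<lambda>_ _. 1) v 0
      = (\<Sum>y\<le>r. \<Sum>x'\<le>r. if x' = 0 then v y * Ml r q 0 y * q 0 0 else 0)"
    unfolding forward_step_def Ms_row0 by (intro sum.cong refl) auto
  then show ?thesis by (simp add: sum.delta sum_distrib_left mult_ac)
qed

text \<open>Emission weights that vanish outside \<open>x' = 0\<close> (as all photon moments do) collapse the
  step to a rank-one map.\<close>

lemma forward_step_emission_at_0:
  assumes "\<And>z x'. x' \<noteq> 0 \<Longrightarrow> \<phi> z x' = 0"
  shows "forward_step r q \<phi> v z = (\<Sum>y\<le>r. v y * Ml r q 0 y) * (Ms q z 0 * \<phi> z 0)"
proof -
  have "(\<Sum>x'\<le>r. v y * (Ml r q x' y * Ms q z x' * \<phi> z x')) = v y * (Ml r q 0 y * Ms q z 0 * \<phi> z 0)" for y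
  proof -
    have "(\<Sum>x'\<le>r. v y * (Ml r q x' y * Ms q z x' * \<phi> z x'))
        = (\<Sum>x'\<le>r. if x' = 0 then v y * (Ml r q 0 y * Ms q z 0 * \<phi> z 0) else 0)"
      using assms by (intro sum.cong) auto
    then show ?thesis by simp
  qed
  then show ?thesis
    unfolding forward_step_def by (simp add: sum_distrib_left sum_distrib_right mult_ac)
qed

lemma forward_add:
  "forward r q \<Phi> v (a + b) = forward r q (\<lambda>s. \<Phi> (s + a)) (forward r q \<Phi> v a) b"
  by (induction b) (simp_all add: add.commute)

lemma forward_cong:
  "(\<And>s. 1 \<le> s \<Longrightarrow> s \<le> n \<Longrightarrow> \<Phi> s = \<Phi>' s) \<Longrightarrow> forward r q \<Phi> v n = forward r q \<Phi>' v n"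
  by (induction n) auto

lemma forward_mass_unit_tail:
  assumes "\<And>z. z \<le> r - 1 \<Longrightarrow> (\<Sum>x\<le>r. q x z) = 1"
    and "\<And>s. n < s \<Longrightarrow> s \<le> N \<Longrightarrow> \<Phi> s = (\<lambda>_ _. 1)" "n \<le> N"
  shows "(\<Sum>z\<le>r. forward r q \<Phi> v N z) = (\<Sum>z\<le>r. forward r q \<Phi> v n z)"
  using assms(2,3)
proof (induction N)
  case (Suc N)
  then show ?case
    by (cases "n = Suc N") (auto simp: forward_step_unit_mass[OF assms(1)])
qed simp

lemma forward_unit_diag:
  fixes V Vinv :: "nat \<Rightarrow> nat \<Rightarrow> complex" and lam :: "nat \<Rightarrow> complex"
  assumes V_inv1: "\<And>i j. i \<le> r \<Longrightarrow> j \<le> r \<Longrightarrow> (\<Sum>k\<le>r. V i k * Vinv k j) = (if i = j then 1 else 0)"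
    and V_inv2: "\<And>i j. i \<le> r \<Longrightarrow> j \<le> r \<Longrightarrow> (\<Sum>k\<le>r. Vinv i k * V k j) = (if i = j then 1 else 0)"
    and diag: "\<And>x z. x \<le> r \<Longrightarrow> z \<le> r \<Longrightarrow>
                 complex_of_real (Mmat r q x z) = (\<Sum>y\<le>r. V x y * lam y * Vinv y z)"
    and "z \<le> r"
  shows "complex_of_real (Mpow r q n v z)
     = (\<Sum>x\<le>r. V z x * lam x ^ n * (\<Sum>w\<le>r. Vinv x w * complex_of_real (v w)))"
  using \<open>z \<le> r\<close>
proof (induction n arbitrary: z)
  case 0
  have "(\<Sum>x\<le>r. V z x * lam x ^ 0 * (\<Sum>w\<le>r. Vinv x w * complex_of_real (v w)))
     = (\<Sum>w\<le>r. (\<Sum>x\<le>r. V z x * Vinv x w) * complex_of_real (v w))"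
    by (simp add: sum_distrib_left sum_distrib_right mult_ac) (rule sum.swap)
  also have "\<dots> = (\<Sum>w\<le>r. if z = w then complex_of_real (v w) else 0)"
    using 0 by (intro sum.cong) (auto simp: V_inv1)
  also have "\<dots> = complex_of_real (v z)" using 0 by (simp add: sum.delta)
  finally show ?case by simp
next
  case (Suc n)
  define c where "c x = (\<Sum>w\<le>r. Vinv x w * complex_of_real (v w))" for x
  have IH: "\<And>y. y \<le> r \<Longrightarrow> complex_of_real (Mpow r q n v y) = (\<Sum>x\<le>r. V y x * lam x ^ n * c x)"
    using Suc.IH unfolding c_def by auto
  have "complex_of_real (Mpow r q (Suc n) v z)
      = (\<Sum>y\<le>r. (\<Sum>a\<le>r. V z a * lam a * Vinv a y) * (\<Sum>x\<le>r. V y x * lam x ^ n * c x))"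
    using Suc.prems by (simp add: forward_step_unit diag IH)
  also have "\<dots> = (\<Sum>a\<le>r. V z a * lam a * (\<Sum>x\<le>r. (\<Sum>y\<le>r. Vinv a y * V y x) * (lam x ^ n * c x)))"
  proof -
    have "(\<Sum>y\<le>r. (\<Sum>a\<le>r. V z a * lam a * Vinv a y) * (\<Sum>x\<le>r. V y x * lam x ^ n * c x))
        = (\<Sum>y\<le>r. \<Sum>a\<le>r. \<Sum>x\<le>r. V z a * lam a * (Vinv a y * V y x) * (lam x ^ n * c x))"
      by (simp add: sum_product mult_ac)
    also have "\<dots> = (\<Sum>a\<le>r. \<Sum>x\<le>r. \<Sum>y\<le>r. V z a * lam a * (Vinv a y * V y x) * (lam x ^ n * c x))"
      by (subst sum.swap, rule sum.cong[OF refl], rule sum.swap)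
    finally show ?thesis by (simp add: sum_distrib_left sum_distrib_right mult_ac)
  qed
  also have "\<dots> = (\<Sum>a\<le>r. V z a * lam a * (\<Sum>x\<le>r. if a = x then lam x ^ n * c x else 0))"
    by (intro sum.cong refl arg_cong2[where f="(*)"]) (auto simp: V_inv2)
  also have "\<dots> = (\<Sum>x\<le>r. V z x * lam x ^ Suc n * c x)"
    by (intro sum.cong refl) (simp add: mult_ac)
  finally show ?case unfolding c_def .
qed

lemma sum_forward_step_emission_at_0:
  assumes "\<And>z x'. x' \<noteq> 0 \<Longrightarrow> \<phi> z x' = 0"
  shows "(\<Sum>z\<le>r. forward_step r q \<phi> v z)
       = (\<Sum>z\<le>r. Ms q z 0 * \<phi> z 0) * (\<Sum>y\<le>r. v y * Ml r q 0 y)"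
  by (simp add: forward_step_emission_at_0[OF assms] sum_distrib_left sum_distrib_right mult_ac)

lemma Mpow_Suc_0:
  assumes "q 0 0 \<noteq> 0"
  shows "(\<Sum>y\<le>r. Mpow r q n v y * Ml r q 0 y) = Mpow r q (Suc n) v 0 / q 0 0"
  using assms by (simp add: forward_step_unit_0)

lemma forward_first_emission:
  assumes "\<And>s. 1 \<le> s \<Longrightarrow> s \<le> k \<Longrightarrow> \<Phi> s = (\<lambda>_ _. 1)"
  shows "forward r q \<Phi> v (Suc k) = forward_step r q (\<Phi> (Suc k)) (Mpow r q k v)"
  using forward_cong[of k \<Phi> "\<lambda>_ _ _. 1"] assms by simp

lemma forward_mass_one_emission:
  assumes q_sum: "\<And>z. z \<le> r - 1 \<Longrightarrow> (\<Sum>x\<le>r. q x z) = 1"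
    and t: "1 \<le> t" "t \<le> T" and q0: "q 0 0 \<noteq> 0"
    and \<phi>: "\<And>z x'. x' \<noteq> 0 \<Longrightarrow> \<phi> z x' = 0"
  shows "(\<Sum>z\<le>r. forward r q (\<lambda>s z x'. if s = t then \<phi> z x' else 1) v T z)
       = (\<Sum>z\<le>r. Ms q z 0 * \<phi> z 0) * (Mpow r q t v 0 / q 0 0)"
proof -
  let ?\<Phi> = "\<lambda>s z x'. if s = t then \<phi> z x' else 1"
  obtain k where k: "t = Suc k" using t by (cases t) auto
  have "(\<Sum>z\<le>r. forward r q ?\<Phi> v T z) = (\<Sum>z\<le>r. forward r q ?\<Phi> v t z)"
    by (rule forward_mass_unit_tail[OF q_sum]) (use t in auto)
  also have "forward r q ?\<Phi> v t = forward_step r q \<phi> (Mpow r q k v)"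
    unfolding k by (subst forward_first_emission) (use k in auto)
  finally show ?thesis
    using k by (simp add: sum_forward_step_emission_at_0[OF \<phi>] Mpow_Suc_0[where q = q, OF q0])
qed

text \<open>Between the two emission times the weights evolve under \<open>M\<^sup>t\<^sup>-\<^sup>t\<^sup>'\<close>, restarting from the
  post-emission weights \<open>w\<close> at time \<open>t'\<close>.\<close>

lemma forward_mass_two_emissions:
  assumes q_sum: "\<And>z. z \<le> r - 1 \<Longrightarrow> (\<Sum>x\<le>r. q x z) = 1"
    and t: "1 \<le> t'" "t' < t" "t \<le> T" and q0: "q 0 0 \<noteq> 0"
    and \<phi>: "\<And>z x'. x' \<noteq> 0 \<Longrightarrow> \<phi> z x' = 0" and \<psi>: "\<And>z x'. x' \<noteq> 0 \<Longrightarrow> \<psi> z x' = 0"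
  shows "(\<Sum>z\<le>r. forward r q (\<lambda>s z x'. if s = t then \<phi> z x' else if s = t' then \<psi> z x' else 1) v T z)
       = (\<Sum>z\<le>r. Ms q z 0 * \<phi> z 0) *
         (Mpow r q (t - t') (\<lambda>z. (Mpow r q t' v 0 / q 0 0) * (Ms q z 0 * \<psi> z 0)) 0 / q 0 0)"
proof -
  let ?\<Phi> = "\<lambda>s z x'. if s = t then \<phi> z x' else if s = t' then \<psi> z x' else 1"
  define w where "w = (\<lambda>z. (Mpow r q t' v 0 / q 0 0) * (Ms q z 0 * \<psi> z 0))"
  obtain k where k: "t' = Suc k" using t by (cases t') auto
  obtain d where d: "t - t' = Suc d" using t by (cases "t - t'") auto
  have tt: "t = t' + Suc d" using d t by auto
  have "forward r q ?\<Phi> v t' = forward_step r q \<psi> (Mpow r q k v)"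
    unfolding k by (subst forward_first_emission) (use k t in auto)
  also have "\<dots> = w"
    by (rule ext) (simp add: forward_step_emission_at_0[OF \<psi>] Mpow_Suc_0[where q = q, OF q0] k w_def)
  finally have at_t': "forward r q ?\<Phi> v t' = w" .
  have "forward r q ?\<Phi> v t = forward r q (\<lambda>s. ?\<Phi> (s + t')) (forward r q ?\<Phi> v t') (Suc d)"
    unfolding tt by (rule forward_add)
  also have "\<dots> = forward_step r q (?\<Phi> (Suc d + t')) (forward r q (\<lambda>s. ?\<Phi> (s + t')) w d)"
    by (simp only: forward.simps at_t')
  also have "?\<Phi> (Suc d + t') = \<phi>"
    using tt by simp
  also have "forward r q (\<lambda>s. ?\<Phi> (s + t')) w d = Mpow r q d w"
    by (rule forward_cong) (use tt in auto)
  finally have at_t: "forward r q ?\<Phi> v t = forward_step r q \<phi> (Mpow r q d w)" .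
  have "(\<Sum>z\<le>r. forward r q ?\<Phi> v T z) = (\<Sum>z\<le>r. forward r q ?\<Phi> v t z)"
    by (rule forward_mass_unit_tail[OF q_sum]) (use t in auto)
  also have "\<dots> = (\<Sum>z\<le>r. Ms q z 0 * \<phi> z 0) * (Mpow r q (t - t') w 0 / q 0 0)"
    unfolding at_t by (simp add: sum_forward_step_emission_at_0[OF \<phi>] Mpow_Suc_0[where q = q, OF q0] d)
  finally show ?thesis unfolding w_def .
qed

locale diagonalization =
  fixes r :: nat and q :: "nat \<Rightarrow> nat \<Rightarrow> real"
    and V Vinv :: "nat \<Rightarrow> nat \<Rightarrow> complex" and lam :: "nat \<Rightarrow> complex"
  assumes r_pos: "1 \<le> r" and q00_nonzero: "q 0 0 \<noteq> 0"
    and V_inv1: "\<And>i j. i \<le> r \<Longrightarrow> j \<le> r \<Longrightarrow> (\<Sum>k\<le>r. V i k * Vinv k j) = (if i = j then 1 else 0)"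
    and V_inv2: "\<And>i j. i \<le> r \<Longrightarrow> j \<le> r \<Longrightarrow> (\<Sum>k\<le>r. Vinv i k * V k j) = (if i = j then 1 else 0)"
    and diag: "\<And>x z. x \<le> r \<Longrightarrow> z \<le> r \<Longrightarrow>
                 complex_of_real (Mmat r q x z) = (\<Sum>y\<le>r. V x y * lam y * Vinv y z)"
    and V_col_r: "\<And>x. x \<le> r \<Longrightarrow> V x r = (if x = r then 1 else 0)"
begin

text \<open>The absorbing eigenvector \<open>e\<^sub>r\<close> does not contribute to the state-\<open>0\<close> component.\<close>

lemma Mpow_0_diag:
  "complex_of_real (Mpow r q n v 0)
     = (\<Sum>x<r. V 0 x * lam x ^ n * (\<Sum>w\<le>r. Vinv x w * complex_of_real (v w)))"
proof -
  have "V 0 r = 0" using V_col_r[of 0] r_pos by simp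
  moreover have "(\<Sum>x\<le>r. f x) = (\<Sum>x<r. f x) + f r" for f :: "nat \<Rightarrow> complex"
    by (simp add: lessThan_Suc_atMost[symmetric])
  ultimately show ?thesis
    using forward_unit_diag[where z = 0 and n = n and v = v, OF V_inv1 V_inv2 diag] by simp
qed

lemma on_prob_diag:
  assumes "1 \<le> t"
  shows "complex_of_real (Mpow r q t \<nu> 0 / q 0 0) = (\<Sum>x<r. alpha r V Vinv lam q \<nu> x * lam x ^ (t - 1))"
proof -
  obtain k where k: "t = Suc k" using assms by (cases t) auto
  show ?thesis
    unfolding of_real_divide Mpow_0_diag alpha_def k sum_divide_distrib
    by (intro sum.cong refl) (simp add: field_simps)
qed

definition spectral0 :: "nat \<Rightarrow> complex" where
  "spectral0 k = (\<Sum>x<r. alpha0 V Vinv lam q x * lam x ^ (k - 1))"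

lemma spectral0_eq:
  assumes "1 \<le> k"
  shows "(\<Sum>x<r. V 0 x * lam x ^ k * Vinv x 0) = of_real (q 0 0) * spectral0 k"
proof -
  obtain j where k: "k = Suc j" using assms by (cases k) auto
  show ?thesis unfolding spectral0_def alpha0_def k sum_distrib_left
    using q00_nonzero by (intro sum.cong refl) (simp add: field_simps)
qed

text \<open>Column \<open>0\<close> of \<open>M\<close> is \<open>q\<^sub>\<cdot>\<^sub>0\<close>, so \<open>q\<^sub>\<cdot>\<^sub>0\<close> is mapped by \<open>V\<^sup>-\<^sup>1\<close> to \<open>\<Lambda> V\<^sup>-\<^sup>1 e\<^sub>0\<close>.\<close>

lemma Vinv_q_column0:
  assumes x: "x \<le> r"
  shows "(\<Sum>z\<le>r. Vinv x z * complex_of_real (q z 0)) = lam x * Vinv x 0"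
proof -
  have "(\<Sum>z\<le>r. Vinv x z * complex_of_real (q z 0)) = (\<Sum>z\<le>r. Vinv x z * (\<Sum>a\<le>r. V z a * lam a * Vinv a 0))"
    by (intro sum.cong refl) (simp flip: diag add: Mmat_col0 Ms_def)
  also have "\<dots> = (\<Sum>a\<le>r. (\<Sum>z\<le>r. Vinv x z * V z a) * (lam a * Vinv a 0))"
    by (simp add: sum_distrib_left sum_distrib_right mult_ac) (rule sum.swap)
  also have "\<dots> = (\<Sum>a\<le>r. if x = a then lam a * Vinv a 0 else 0)"
    using x by (intro sum.cong refl) (simp add: V_inv2)
  also have "\<dots> = lam x * Vinv x 0" using x by simp
  finally show ?thesis .
qed

lemma Mpow_emission_diag:
  assumes "1 \<le> d"
  shows "complex_of_real (Mpow r q d (\<lambda>z. c * (Ms q z 0 * (if z = 0 then a else b))) 0)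
    = of_real c * of_real (q 0 0) * (of_real b * spectral0 (d + 1) + of_real (a - b) * of_real (q 0 0) * spectral0 d)"
proof -
  have weights: "(\<Sum>w\<le>r. Vinv x w * complex_of_real (c * (Ms q w 0 * (if w = 0 then a else b))))
     = of_real c * (of_real b * (lam x * Vinv x 0) + of_real (a - b) * of_real (q 0 0) * Vinv x 0)"
    if x: "x \<le> r" for x
  proof -
    have "(\<Sum>w\<le>r. Vinv x w * complex_of_real (c * (Ms q w 0 * (if w = 0 then a else b))))
       = (\<Sum>w\<le>r. of_real c * (of_real b * (Vinv x w * complex_of_real (q w 0)))
            + (if w = 0 then of_real c * (of_real (a - b) * of_real (q 0 0) * Vinv x 0) else 0))"
      by (intro sum.cong refl) (auto simp: Ms_def algebra_simps)
    also have "\<dots> = of_real c * (of_real b * (\<Sum>w\<le>r. Vinv x w * complex_of_real (q w 0))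
                      + of_real (a - b) * of_real (q 0 0) * Vinv x 0)"
      by (simp add: sum.distrib sum_distrib_left distrib_left)
    finally show ?thesis using Vinv_q_column0[OF x] by simp
  qed
  have "complex_of_real (Mpow r q d (\<lambda>z. c * (Ms q z 0 * (if z = 0 then a else b))) 0)
     = (\<Sum>x<r. V 0 x * lam x ^ d * (of_real c * (of_real b * (lam x * Vinv x 0)
                                       + of_real (a - b) * of_real (q 0 0) * Vinv x 0)))"
    unfolding Mpow_0_diag by (intro sum.cong refl) (subst weights, auto)
  also have "\<dots> = of_real c * (of_real b * (\<Sum>x<r. V 0 x * lam x ^ (d + 1) * Vinv x 0)
                   + of_real (a - b) * of_real (q 0 0) * (\<Sum>x<r. V 0 x * lam x ^ d * Vinv x 0))"
    by (simp add: sum_distrib_left sum.distrib sum_subtractf algebra_simps)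
  also have "\<dots> = of_real c * of_real (q 0 0) * (of_real b * spectral0 (d + 1)
                   + of_real (a - b) * of_real (q 0 0) * spectral0 d)"
    using spectral0_eq[of "d + 1"] spectral0_eq[OF assms] by (simp add: algebra_simps)
  finally show ?thesis .
qed

end

section \<open>Integration against nonnegative integer valued variables\<close>

lemma pmf_sums_one: "(\<lambda>n::nat. pmf p n) sums 1"
proof -
  have "(\<lambda>n. measure (measure_pmf p) {n}) sums measure (measure_pmf p) (\<Union>n. {n})"
    by (rule measure_UNION) (auto simp: disjoint_family_on_def)
  then show ?thesis by (simp add: measure_pmf_single)
qed

lemma nn_integral_pmf_nat:
  fixes p :: "nat pmf"
  shows "(\<integral>\<^sup>+x. ennreal (h x) \<partial>measure_pmf p) = (\<Sum>a. ennreal (pmf p a) * ennreal (h a))"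
  by (simp add: nn_integral_measure_pmf nn_integral_count_space_nat)

lemma suminf_pmf_eq_integral:
  fixes p :: "nat pmf"
  assumes "integrable (measure_pmf p) h" "\<And>x. 0 \<le> h x"
  shows "(\<Sum>a. ennreal (pmf p a) * ennreal (h a)) = ennreal (\<integral>x. h x \<partial>p)"
  using nn_integral_eq_integral[of "measure_pmf p" h] assms by (simp add: nn_integral_pmf_nat)

lemma suminf_mult_suminf_ennreal:
  fixes c :: ennreal
  shows "(\<Sum>a. \<Sum>b. c * (f a * g b)) = c * ((\<Sum>a. f a) * (\<Sum>b. g b))"
proof -
  have "(\<Sum>b. c * (f a * g b)) = (c * f a) * (\<Sum>b. g b)" for a
    by (subst ennreal_suminf_cmult[symmetric]) (simp add: mult.assoc)
  then show ?thesis by (simp add: mult.assoc)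
qed

lemma nn_integral_nat_valued:
  fixes F :: "nat \<Rightarrow> 'a \<Rightarrow> ennreal"
  assumes N: "N \<in> measurable M (count_space UNIV)" and F: "\<And>n. F n \<in> borel_measurable M"
  shows "(\<integral>\<^sup>+\<omega>. F (N \<omega>) \<omega> \<partial>M) = (\<Sum>n. \<integral>\<^sup>+\<omega>. F n \<omega> * indicator {\<omega>\<in>space M. N \<omega> = n} \<omega> \<partial>M)"
proof -
  have level_sets: "{\<omega>\<in>space M. N \<omega> = n} \<in> sets M" for n
    using N by measurable
  have "(\<integral>\<^sup>+\<omega>. F (N \<omega>) \<omega> \<partial>M) = (\<integral>\<^sup>+\<omega>. (\<Sum>n. F n \<omega> * indicator {\<omega>\<in>space M. N \<omega> = n} \<omega>) \<partial>M)"
  proof (rule nn_integral_cong)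
    fix \<omega> assume \<omega>: "\<omega> \<in> space M"
    have "(\<lambda>n. F n \<omega> * indicator {\<omega>\<in>space M. N \<omega> = n} \<omega>) = (\<lambda>n. if n = N \<omega> then F n \<omega> else 0)"
      using \<omega> by (auto simp: indicator_def)
    then show "F (N \<omega>) \<omega> = (\<Sum>n. F n \<omega> * indicator {\<omega>\<in>space M. N \<omega> = n} \<omega>)"
      using sums_single[of "N \<omega>" "\<lambda>n. F n \<omega>"] by (simp add: sums_iff)
  qed
  also have "\<dots> = (\<Sum>n. \<integral>\<^sup>+\<omega>. F n \<omega> * indicator {\<omega>\<in>space M. N \<omega> = n} \<omega> \<partial>M)"
    by (rule nn_integral_suminf) (use F level_sets in auto)
  finally show ?thesis .
qed

lemma nn_integral_nat_valued_indicator: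
  fixes f :: "nat \<Rightarrow> ennreal"
  assumes N: "N \<in> measurable M (count_space UNIV)" and A: "A \<in> sets M"
  shows "(\<integral>\<^sup>+\<omega>. f (N \<omega>) * indicator A \<omega> \<partial>M) = (\<Sum>n. f n * emeasure M (A \<inter> {\<omega>\<in>space M. N \<omega> = n}))"
proof -
  have "(\<integral>\<^sup>+\<omega>. f (N \<omega>) * indicator A \<omega> \<partial>M)
      = (\<Sum>n. \<integral>\<^sup>+\<omega>. f n * indicator (A \<inter> {\<omega>\<in>space M. N \<omega> = n}) \<omega> \<partial>M)"
    using nn_integral_nat_valued[OF N, where F = "\<lambda>n \<omega>. f n * indicator A \<omega>"] A
    by (simp add: indicator_inter_arith mult.assoc)
  also have "\<dots> = (\<Sum>n. f n * emeasure M (A \<inter> {\<omega>\<in>space M. N \<omega> = n}))"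
  proof (intro suminf_cong nn_integral_cmult_indicator)
    show "A \<inter> {\<omega>\<in>space M. N \<omega> = n} \<in> sets M" for n
      using N A by measurable
  qed
  finally show ?thesis .
qed

lemma nn_integral_nat_valued_fun:
  fixes g :: "nat \<Rightarrow> ennreal"
  assumes N: "N \<in> measurable M (count_space UNIV)"
  shows "(\<integral>\<^sup>+\<omega>. g (N \<omega>) \<partial>M) = (\<Sum>n. emeasure M {\<omega>\<in>space M. N \<omega> = n} * g n)"
proof -
  have "(\<integral>\<^sup>+\<omega>. g (N \<omega>) \<partial>M) = (\<integral>\<^sup>+\<omega>. g (N \<omega>) * indicator (space M) \<omega> \<partial>M)"
    by (rule nn_integral_cong) auto
  also have "\<dots> = (\<Sum>n. g n * emeasure M (space M \<inter> {\<omega>\<in>space M. N \<omega> = n}))"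
    by (rule nn_integral_nat_valued_indicator[OF N]) simp
  also have "\<dots> = (\<Sum>n. emeasure M {\<omega>\<in>space M. N \<omega> = n} * g n)"
    by (intro suminf_cong) (simp add: mult.commute Int_absorb1 Collect_subset)
  finally show ?thesis .
qed

lemma mgf_finite_near0_moments:
  assumes "mgf_finite_near0 p"
  shows "integrable (measure_pmf p) real" "integrable (measure_pmf p) (\<lambda>n. (real n)\<^sup>2)"
proof -
  obtain \<delta> where \<delta>: "\<delta> > 0" "\<And>s. \<bar>s\<bar> < \<delta> \<Longrightarrow> summable (\<lambda>n. pmf p n * exp (s * real n))"
    using assms unfolding mgf_finite_near0_def by blast
  define s where "s = \<delta> / 2"
  have s_pos: "0 < s"
    using \<delta>(1) by (simp add: s_def)
  have "summable (\<lambda>n. pmf p n * exp (s * real n))"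
    using \<delta>(1) by (intro \<delta>(2)) (simp add: s_def)
  have "(\<integral>\<^sup>+x. ennreal (exp (s * real x)) \<partial>measure_pmf p) = ennreal (\<Sum>n. pmf p n * exp (s * real n))"
    unfolding nn_integral_pmf_nat ennreal_mult[symmetric, OF pmf_nonneg exp_ge_zero]
    by (rule suminf_ennreal2) (use \<open>summable _\<close> in auto)
  then have exp_integrable: "integrable (measure_pmf p) (\<lambda>n. exp (s * real n))"
    by (intro integrableI_bounded) simp_all
  text \<open>Both moments are dominated by the exponential moment via \<open>x \<le> e\<^sup>x\<close>.\<close>
  have first: "real n \<le> exp (s * real n) / s" for n
  proof -
    have "s * real n \<le> exp (s * real n)" using exp_ge_add_one_self[of "s * real n"] by linarith
    then show ?thesis using s_pos by (simp add: field_simps)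
  qed
  have second: "(real n)\<^sup>2 \<le> 4 / s\<^sup>2 * exp (s * real n)" for n
  proof -
    have "s * real n / 2 \<le> exp (s * real n / 2)" using exp_ge_add_one_self[of "s * real n / 2"] by linarith
    then have "(s * real n / 2)\<^sup>2 \<le> (exp (s * real n / 2))\<^sup>2"
      using s_pos by (intro power_mono) auto
    also have "(exp (s * real n / 2))\<^sup>2 = exp (s * real n)"
      by (simp add: power2_eq_square exp_add[symmetric])
    finally show ?thesis using s_pos by (simp add: field_simps power2_eq_square)
  qed
  show "integrable (measure_pmf p) real"
    by (rule Bochner_Integration.integrable_bound[OF integrable_mult_right[OF exp_integrable, of "1/s"]])
       (use first s_pos in \<open>auto simp: field_simps\<close>)
  show "integrable (measure_pmf p) (\<lambda>n. (real n)\<^sup>2)"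
    by (rule Bochner_Integration.integrable_bound[OF integrable_mult_right[OF exp_integrable, of "4/s\<^sup>2"]])
       (use second s_pos in \<open>auto simp: field_simps\<close>)
qed

section \<open>Independence\<close>

context prob_space
begin

lemma indep_vars_of_indep_sets:
  fixes Z :: "'j \<Rightarrow> 'a \<Rightarrow> 'b::topological_space"
  assumes ind: "indep_sets F I" and J: "J \<subseteq> I"
    and meas: "\<And>x. x \<in> J \<Longrightarrow> Z x \<in> borel_measurable M"
    and sub: "\<And>x. x \<in> J \<Longrightarrow> {Z x -` A \<inter> space M | A. A \<in> sets borel} \<subseteq> F x"
  shows "indep_vars (\<lambda>_. borel) Z J"
  unfolding indep_vars_def2
  using meas indep_sets_mono_sets[OF indep_sets_mono_index[OF J ind]] sub by auto

lemma vimage_sets_subset_sigma_sets: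
  assumes "f \<in> measurable (sigma (space M) G) N" "G \<subseteq> Pow (space M)"
  shows "{f -` A \<inter> space M | A. A \<in> sets N} \<subseteq> sigma_sets (space M) G"
proof safe
  fix A assume "A \<in> sets N"
  then have "f -` A \<inter> space (sigma (space M) G) \<in> sets (sigma (space M) G)"
    using assms(1) by (rule measurable_sets[rotated])
  then show "f -` A \<inter> space M \<in> sigma_sets (space M) G"
    using assms(2) by (simp add: sets_measure_of space_measure_of_conv)
qed

lemma indep_sets_integral_mult:
  fixes X Y :: "'a \<Rightarrow> real"
  assumes ind: "indep_sets F I" and ij: "i \<in> I" "j \<in> I" "i \<noteq> j"
    and meas: "X \<in> borel_measurable M" "Y \<in> borel_measurable M"
    and sub: "{X -` A \<inter> space M | A. A \<in> sets borel} \<subseteq> F i" "{Y -` A \<inter> space M | A. A \<in> sets borel} \<subseteq> F j"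
    and int: "integrable M X" "integrable M Y"
  shows "integrable M (\<lambda>\<omega>. X \<omega> * Y \<omega>) \<and> expectation (\<lambda>\<omega>. X \<omega> * Y \<omega>) = expectation X * expectation Y"
proof -
  define Z where "Z = (\<lambda>x. if x = i then X else Y)"
  have indep: "indep_vars (\<lambda>_. borel) Z {i, j}"
    by (rule indep_vars_of_indep_sets[OF ind]) (use ij meas sub in \<open>auto simp: Z_def\<close>)
  have Z_int: "\<And>x. x \<in> {i, j} \<Longrightarrow> integrable M (Z x)" using int by (auto simp: Z_def)
  have prod_Z: "(\<lambda>\<omega>. \<Prod>x\<in>{i, j}. Z x \<omega>) = (\<lambda>\<omega>. X \<omega> * Y \<omega>)" using ij by (auto simp: Z_def)
  show ?thesis
    using indep_vars_lebesgue_integral[OF _ indep Z_int] indep_vars_integrable[OF _ indep Z_int] ij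
    by (simp add: prod_Z Z_def)
qed

lemma nn_integral_indicator_prod_indep:
  fixes F :: "nat \<Rightarrow> 'a \<Rightarrow> ennreal" and G :: "nat \<Rightarrow> 'a set set"
  assumes ind: "indep_sets (\<lambda>j. sigma_sets (space M) (G j)) (insert 0 J)"
    and J: "finite J" "0 \<notin> J"
    and G: "\<And>j. G j \<subseteq> Pow (space M)"
    and A_G: "(\<lambda>\<omega>. indicator A \<omega> :: ennreal) \<in> measurable (sigma (space M) (G 0)) borel"
    and A: "A \<in> sets M"
    and F_G: "\<And>j. j \<in> J \<Longrightarrow> F j \<in> measurable (sigma (space M) (G j)) borel"
    and F: "\<And>j. F j \<in> borel_measurable M"
  shows "(\<integral>\<^sup>+\<omega>. (\<Prod>j\<in>J. F j \<omega>) * indicator A \<omega> \<partial>M) = emeasure M A * (\<Prod>j\<in>J. \<integral>\<^sup>+\<omega>. F j \<omega> \<partial>M)"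
proof -
  define Z where "Z j = (if j = 0 then (\<lambda>\<omega>. indicator A \<omega> :: ennreal) else F j)" for j
  have "indep_vars (\<lambda>_. borel) Z (insert 0 J)"
  proof (rule indep_vars_of_indep_sets[OF ind order.refl])
    fix j assume j: "j \<in> insert 0 J"
    show "Z j \<in> borel_measurable M"
      using A F by (simp add: Z_def)
    show "{Z j -` B \<inter> space M | B. B \<in> sets borel} \<subseteq> sigma_sets (space M) (G j)"
      using j vimage_sets_subset_sigma_sets[OF A_G G] vimage_sets_subset_sigma_sets[OF F_G G]
      by (cases "j = 0") (simp_all add: Z_def)
  qed
  then have "(\<integral>\<^sup>+\<omega>. (\<Prod>j\<in>insert 0 J. Z j \<omega>) \<partial>M) = (\<Prod>j\<in>insert 0 J. \<integral>\<^sup>+\<omega>. Z j \<omega> \<partial>M)"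
    using J(1) by (intro indep_vars_nn_integral) auto
  moreover have "(\<Prod>j\<in>J. Z j \<omega>) = (\<Prod>j\<in>J. F j \<omega>)" for \<omega>
    using J by (intro prod.cong) (auto simp: Z_def)
  moreover have "(\<Prod>j\<in>J. \<integral>\<^sup>+\<omega>. Z j \<omega> \<partial>M) = (\<Prod>j\<in>J. \<integral>\<^sup>+\<omega>. F j \<omega> \<partial>M)"
    using J by (intro prod.cong) (auto simp: Z_def)
  ultimately show ?thesis
    using J A by (simp add: Z_def mult.commute)
qed

text \<open>Wald's identity in factorised form: the random index \<open>N\<close> is independent of the \<open>F j\<close>.\<close>

lemma nn_integral_random_index_indep:
  fixes F :: "nat \<Rightarrow> nat \<Rightarrow> 'a \<Rightarrow> ennreal" and G :: "nat \<Rightarrow> 'a set set"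
  assumes ind: "indep_sets (\<lambda>j. sigma_sets (space M) (G j)) (insert 0 J)"
    and J: "finite J" "0 \<notin> J"
    and G: "\<And>j. G j \<subseteq> Pow (space M)"
    and N_G: "N \<in> measurable (sigma (space M) (G 0)) (count_space UNIV)"
    and N: "N \<in> measurable M (count_space UNIV)"
    and F_G: "\<And>j n. j \<in> J \<Longrightarrow> F j n \<in> measurable (sigma (space M) (G j)) borel"
    and F: "\<And>j n. F j n \<in> borel_measurable M"
  shows "(\<integral>\<^sup>+\<omega>. (\<Prod>j\<in>J. F j (N \<omega>) \<omega>) \<partial>M)
       = (\<Sum>n. emeasure M {\<omega>\<in>space M. N \<omega> = n} * (\<Prod>j\<in>J. \<integral>\<^sup>+\<omega>. F j n \<omega> \<partial>M))"
proof -
  have "(\<integral>\<^sup>+\<omega>. (\<Prod>j\<in>J. F j (N \<omega>) \<omega>) \<partial>M)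
      = (\<Sum>n. \<integral>\<^sup>+\<omega>. (\<Prod>j\<in>J. F j n \<omega>) * indicator {\<omega>\<in>space M. N \<omega> = n} \<omega> \<partial>M)"
    using F by (intro nn_integral_nat_valued[OF N]) measurable
  also have "\<dots> = (\<Sum>n. emeasure M {\<omega>\<in>space M. N \<omega> = n} * (\<Prod>j\<in>J. \<integral>\<^sup>+\<omega>. F j n \<omega> \<partial>M))"
  proof (intro suminf_cong nn_integral_indicator_prod_indep[OF ind J G _ _ F_G F])
    fix n
    have "{\<omega>\<in>space M. N \<omega> = n} = N -` {n} \<inter> space (sigma (space M) (G 0))"
      using G by (auto simp: space_measure_of_conv)
    also have "\<dots> \<in> sets (sigma (space M) (G 0))" using N_G by (rule measurable_sets) simp
    finally show "(\<lambda>\<omega>. indicator {\<omega>\<in>space M. N \<omega> = n} \<omega> :: ennreal) \<in> measurable (sigma (space M) (G 0)) borel"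
      by simp
    show "{\<omega>\<in>space M. N \<omega> = n} \<in> sets M"
      using N by measurable
  qed
  finally show ?thesis .
qed

lemma integral_sum_mult_sum:
  fixes A B :: "'i \<Rightarrow> 'a \<Rightarrow> real"
  assumes K: "finite K"
    and AB: "\<And>k l. k \<in> K \<Longrightarrow> l \<in> K \<Longrightarrow>
      integrable M (\<lambda>\<omega>. A k \<omega> * B l \<omega>) \<and> expectation (\<lambda>\<omega>. A k \<omega> * B l \<omega>) = (if k = l then d else e)"
  shows "integrable M (\<lambda>\<omega>. (\<Sum>k\<in>K. A k \<omega>) * (\<Sum>l\<in>K. B l \<omega>)) \<and>
     expectation (\<lambda>\<omega>. (\<Sum>k\<in>K. A k \<omega>) * (\<Sum>l\<in>K. B l \<omega>))
       = real (card K) * d + real (card K) * (real (card K) - 1) * e"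
proof -
  have "(\<Sum>l\<in>K. if k = l then d else e) = d + (real (card K) - 1) * e" if k: "k \<in> K" for k
  proof -
    have "(\<Sum>l\<in>K. if k = l then d else e) = d + (\<Sum>l\<in>K - {k}. if k = l then d else e)"
      using K k by (simp add: sum.remove)
    also have "(\<Sum>l\<in>K - {k}. if k = l then d else e) = (\<Sum>l\<in>K - {k}. e)"
      by (intro sum.cong) auto
    moreover have "1 \<le> card K"
      using K k by (metis One_nat_def Suc_leI card_gt_0_iff empty_iff)
    ultimately show ?thesis
      using K k by (simp add: card_Diff_singleton)
  qed
  then have "(\<Sum>k\<in>K. \<Sum>l\<in>K. if k = l then d else e) = (\<Sum>k\<in>K. d + (real (card K) - 1) * e)"
    by (intro sum.cong) auto
  moreover have "integrable M (\<lambda>\<omega>. \<Sum>k\<in>K. \<Sum>l\<in>K. A k \<omega> * B l \<omega>)"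
    using AB by (intro Bochner_Integration.integrable_sum) blast
  moreover have "expectation (\<lambda>\<omega>. \<Sum>k\<in>K. \<Sum>l\<in>K. A k \<omega> * B l \<omega>) = (\<Sum>k\<in>K. \<Sum>l\<in>K. if k = l then d else e)"
    using AB by (simp add: Bochner_Integration.integral_sum)
  ultimately show ?thesis
    unfolding sum_product by (simp add: algebra_simps)
qed

lemma integral_eq_of_nn_integral_eq:
  fixes f g :: "'a \<Rightarrow> real"
  assumes f: "f \<in> borel_measurable M" "\<And>\<omega>. \<omega> \<in> space M \<Longrightarrow> 0 \<le> f \<omega>"
    and g: "integrable M g" "\<And>\<omega>. \<omega> \<in> space M \<Longrightarrow> 0 \<le> g \<omega>"
    and eq: "(\<integral>\<^sup>+\<omega>. ennreal (f \<omega>) \<partial>M) = (\<integral>\<^sup>+\<omega>. ennreal (g \<omega>) \<partial>M)"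
  shows "integrable M f \<and> expectation f = expectation g"
proof -
  have "(\<integral>\<^sup>+\<omega>. ennreal (f \<omega>) \<partial>M) = ennreal (expectation g)"
    using eq nn_integral_eq_integral[OF g(1)] g(2) by simp
  moreover have "0 \<le> expectation g"
    using g(2) by (simp add: Bochner_Integration.integral_nonneg)
  ultimately show ?thesis
    using nn_integral_eq_integrable[of f M "expectation g"] f by simp
qed

lemma covar_eq:
  fixes X Y :: "'a \<Rightarrow> real"
  assumes "integrable M X" "integrable M Y" "integrable M (\<lambda>\<omega>. X \<omega> * Y \<omega>)"
  shows "covar M X Y = expectation (\<lambda>\<omega>. X \<omega> * Y \<omega>) - expectation X * expectation Y"
proof -
  have "(\<lambda>\<omega>. (X \<omega> - expectation X) * (Y \<omega> - expectation Y))
     = (\<lambda>\<omega>. X \<omega> * Y \<omega> - expectation Y * X \<omega> - expectation X * Y \<omega> + expectation X * expectation Y)"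
    by (auto simp: algebra_simps)
  then show ?thesis unfolding covar_def using assms by (simp add: prob_space)
qed

end

section \<open>Photon moments of a single fluorophore\<close>

lemma (in finite_measure) measure_UN_pmf_weighted:
  fixes E :: "nat \<Rightarrow> 'a set" and p :: "nat pmf"
  assumes "range E \<subseteq> sets M" "disjoint_family E" "\<And>y. measure M (E y) = c * pmf p y"
  shows "measure M (\<Union>y. E y) = c"
proof -
  have "(\<lambda>y. measure M (E y)) sums measure M (\<Union>y. E y)"
    by (rule measure_UNION) (use assms in \<open>auto simp: emeasure_eq_measure\<close>)
  moreover have "(\<lambda>y. c * pmf p y) sums c"
    using sums_mult[OF pmf_sums_one[of p], of c] by simp
  ultimately show ?thesis using assms(3) by (simp add: sums_unique2)
qed

text \<open>\<open>on_prob r q \<nu> t\<close> is \<open>P(X'\<^sub>t = 0)\<close>, since \<open>P(X\<^sub>t = 0) = q\<^sub>0\<^sub>0 P(X'\<^sub>t = 0)\<close>;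
  \<open>on_mom2\<close> is \<open>E[Y'\<^sub>t\<^sup>2 | X'\<^sub>t = 0]\<close>, and \<open>joint_on \<dots> t t'\<close> is \<open>E[Y'\<^sub>t\<^sub>' ; X'\<^sub>t = 0]\<close>.\<close>

definition on_prob :: "nat \<Rightarrow> (nat \<Rightarrow> nat \<Rightarrow> real) \<Rightarrow> (nat \<Rightarrow> real) \<Rightarrow> nat \<Rightarrow> real" where
  "on_prob r q \<nu> t = Mpow r q t \<nu> 0 / q 0 0"

definition on_mom2 :: "nat \<Rightarrow> (nat \<Rightarrow> nat \<Rightarrow> real) \<Rightarrow> nat pmf \<Rightarrow> nat pmf \<Rightarrow> real" where
  "on_mom2 r q p00 p10 = (\<Sum>x\<le>r. Ms q x 0 * pmf_mom2 (emis p00 p10 x 0))"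

definition joint_on ::
    "nat \<Rightarrow> (nat \<Rightarrow> nat \<Rightarrow> real) \<Rightarrow> (nat \<Rightarrow> real) \<Rightarrow> nat pmf \<Rightarrow> nat pmf \<Rightarrow> nat \<Rightarrow> nat \<Rightarrow> real" where
  "joint_on r q \<nu> p00 p10 t t' =
     Mpow r q (t - t') (\<lambda>z. on_prob r q \<nu> t' * (Ms q z 0 * pmf_mean (emis p00 p10 z 0))) 0 / q 0 0"

locale single_fluorophore = prob_space M
  for M :: "'a measure" +
  fixes r T :: nat and q :: "nat \<Rightarrow> nat \<Rightarrow> real" and \<nu> :: "nat \<Rightarrow> real"
    and p00 p10 :: "nat pmf" and X Xp Yp :: "nat \<Rightarrow> 'a \<Rightarrow> nat"
  assumes q_range: "\<And>x z. x \<le> r \<Longrightarrow> z \<le> r - 1 \<Longrightarrow> 0 \<le> q x z \<and> q x z \<le> 1"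
    and q_sum: "\<And>z. z \<le> r - 1 \<Longrightarrow> (\<Sum>x\<le>r. q x z) = 1"
    and q00_nonzero: "q 0 0 \<noteq> 0"
    and nu_nonneg: "\<And>z. z \<le> r \<Longrightarrow> 0 \<le> \<nu> z"
    and nu_sum: "(\<Sum>z\<le>r. \<nu> z) = 1"
    and X_meas[measurable]: "\<And>t. X t \<in> measurable M (count_space UNIV)"
    and Xp_meas[measurable]: "\<And>t. Xp t \<in> measurable M (count_space UNIV)"
    and Yp_meas[measurable]: "\<And>t. Yp t \<in> measurable M (count_space UNIV)"
    and law: "\<And>xs xps ys. (\<forall>t\<le>T. xs t \<le> r) \<Longrightarrow> (\<forall>t\<in>{1..T}. xps t \<le> r) \<Longrightarrow>
       measure M {\<omega> \<in> space M. \<forall>t\<le>T. X t \<omega> = xs t \<and>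
                      (1 \<le> t \<longrightarrow> Xp t \<omega> = xps t \<and> Yp t \<omega> = ys t)}
       = \<nu> (xs 0) * (\<Prod>t\<in>{1..T}. Ml r q (xps t) (xs (t - 1)) * Ms q (xs t) (xps t)
                                 * pmf (emis p00 p10 (xs t) (xps t)) (ys t))"
    and mom1: "integrable (measure_pmf p00) real" "integrable (measure_pmf p10) real"
    and mom2: "integrable (measure_pmf p00) (\<lambda>n. (real n)\<^sup>2)" "integrable (measure_pmf p10) (\<lambda>n. (real n)\<^sup>2)"
begin

text \<open>A path fixes the hidden states \<open>X\<^sub>0..X\<^sub>T\<close> and \<open>X'\<^sub>1..X'\<^sub>T\<close>; given the path, the photon
  counts are independent with laws \<open>path_emis p t\<close>.\<close>

definition paths :: "((nat \<Rightarrow> nat) \<times> (nat \<Rightarrow> nat)) set" where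
  "paths = PiE {..T} (\<lambda>_. {..r}) \<times> PiE {1..T} (\<lambda>_. {..r})"

definition path_event :: "(nat \<Rightarrow> nat) \<times> (nat \<Rightarrow> nat) \<Rightarrow> 'a set" where
  "path_event p = {\<omega> \<in> space M. \<forall>t\<le>T. X t \<omega> = fst p t \<and> (1 \<le> t \<longrightarrow> Xp t \<omega> = snd p t)}"

definition path_prob :: "(nat \<Rightarrow> nat) \<times> (nat \<Rightarrow> nat) \<Rightarrow> real" where
  "path_prob p = \<nu> (fst p 0) * (\<Prod>t\<in>{1..T}. Ml r q (snd p t) (fst p (t - 1)) * Ms q (fst p t) (snd p t))"

definition path_emis :: "(nat \<Rightarrow> nat) \<times> (nat \<Rightarrow> nat) \<Rightarrow> nat \<Rightarrow> nat pmf" where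
  "path_emis p t = emis p00 p10 (fst p t) (snd p t)"

lemma finite_paths: "finite paths"
  unfolding paths_def by (auto intro!: finite_PiE)

lemma path_event_sets[measurable]: "path_event p \<in> sets M"
  unfolding path_event_def by measurable

lemma path_prob_nonneg: "p \<in> paths \<Longrightarrow> 0 \<le> path_prob p"
  unfolding path_prob_def paths_def
  by (auto intro!: mult_nonneg_nonneg prod_nonneg nu_nonneg Ml_nonneg[OF q_range] Ms_nonneg[OF q_range]
           simp: PiE_iff)

lemma measure_path_event_emissions_aux:
  assumes p: "p \<in> paths" and D: "finite D" "D \<subseteq> {1..T}"
  shows "measure M (path_event p \<inter> {\<omega>. \<forall>s\<in>{1..T} - D. Yp s \<omega> = ys s})
       = path_prob p * (\<Prod>s\<in>{1..T} - D. pmf (path_emis p s) (ys s))"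
  using D
proof (induction D arbitrary: ys rule: finite_induct)
  case empty
  have "path_event p \<inter> {\<omega>. \<forall>s\<in>{1..T}. Yp s \<omega> = ys s}
      = {\<omega> \<in> space M. \<forall>t\<le>T. X t \<omega> = fst p t \<and> (1 \<le> t \<longrightarrow> Xp t \<omega> = snd p t \<and> Yp t \<omega> = ys t)}"
    unfolding path_event_def by auto
  moreover have "\<forall>t\<le>T. fst p t \<le> r" "\<forall>t\<in>{1..T}. snd p t \<le> r"
    using p unfolding paths_def by (auto simp: PiE_iff)
  ultimately show ?case using law[of "fst p" "snd p" ys]
    by (simp add: path_prob_def path_emis_def prod.distrib mult_ac)
next
  case (insert d D)
  let ?S = "{1..T} - insert d D"
  let ?E = "\<lambda>y. path_event p \<inter> {\<omega>. \<forall>s\<in>{1..T} - D. Yp s \<omega> = (ys(d := y)) s}"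
  have d: "d \<in> {1..T} - D" using insert by auto
  then have S: "{1..T} - D = insert d ?S" by auto
  text \<open>Summing out the count at the free time \<open>d\<close>.\<close>
  have "path_event p \<inter> {\<omega>. \<forall>s\<in>?S. Yp s \<omega> = ys s} = (\<Union>y. ?E y)"
    unfolding S by (auto simp: fun_upd_def)
  also have "measure M \<dots> = path_prob p * (\<Prod>s\<in>?S. pmf (path_emis p s) (ys s))"
  proof (rule measure_UN_pmf_weighted)
    have "?E y = path_event p \<inter> {\<omega>\<in>space M. \<forall>s\<in>{1..T} - D. Yp s \<omega> = (ys(d := y)) s}" for y
      by (auto simp: path_event_def)
    then show "range ?E \<subseteq> sets M" by auto
    show "disjoint_family ?E"
      using d by (auto simp: disjoint_family_on_def)
    fix y
    have "measure M (?E y) = path_prob p * (\<Prod>s\<in>{1..T} - D. pmf (path_emis p s) ((ys(d := y)) s))"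
      using insert.prems by (intro insert.IH) auto
    also have "\<dots> = path_prob p * (\<Prod>s\<in>?S. pmf (path_emis p s) (ys s)) * pmf (path_emis p d) y"
      unfolding S by (subst prod.insert) (auto intro!: prod.cong simp: mult_ac)
    finally show "measure M (?E y) = path_prob p * (\<Prod>s\<in>?S. pmf (path_emis p s) (ys s)) * pmf (path_emis p d) y" .
  qed
  finally show ?case .
qed

lemma measure_path_event_emissions:
  assumes p: "p \<in> paths" and S: "S \<subseteq> {1..T}"
  shows "measure M (path_event p \<inter> {\<omega>. \<forall>s\<in>S. Yp s \<omega> = ys s})
       = path_prob p * (\<Prod>s\<in>S. pmf (path_emis p s) (ys s))"
proof -
  have "{1..T} - ({1..T} - S) = S" using S by auto
  then show ?thesis using measure_path_event_emissions_aux[OF p, of "{1..T} - S" ys] by simp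
qed

lemma sum_path_prob_forward:
  "(\<Sum>p\<in>paths. path_prob p * (\<Prod>s\<in>{1..T}. \<Phi> s (fst p s) (snd p s))) = (\<Sum>z\<le>r. forward r q \<Phi> \<nu> T z)"
  using sum_paths_forward[where v = \<nu> and \<Phi> = \<Phi> and f = "\<lambda>_. 1" and n = T]
  unfolding paths_def path_prob_def by (simp add: sum.cartesian_product prod.distrib case_prod_unfold mult_ac)

lemma sum_path_prob: "(\<Sum>p\<in>paths. path_prob p) = 1"
proof -
  have "(\<Sum>p\<in>paths. path_prob p) = (\<Sum>z\<le>r. Mpow r q T \<nu> z)"
    using sum_path_prob_forward[of "\<lambda>_ _ _. 1"] by simp
  also have "\<dots> = (\<Sum>z\<le>r. Mpow r q 0 \<nu> z)"
    by (rule forward_mass_unit_tail[OF q_sum]) auto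
  finally show ?thesis using nu_sum by simp
qed

lemma disjoint_path_events: "disjoint_family_on (\<lambda>p. A \<inter> path_event p) paths"
proof -
  have "p = p'" if "p \<in> paths" "p' \<in> paths" "\<omega> \<in> path_event p" "\<omega> \<in> path_event p'" for p p' \<omega>
  proof -
    have "fst p = fst p'"
      by (rule PiE_ext[of _ "{..T}" "\<lambda>_. {..r}"]) (use that in \<open>auto simp: paths_def path_event_def\<close>)
    moreover have "snd p = snd p'"
      by (rule PiE_ext[of _ "{1..T}" "\<lambda>_. {..r}"]) (use that in \<open>auto simp: paths_def path_event_def\<close>)
    ultimately show ?thesis by (simp add: prod_eq_iff)
  qed
  then show ?thesis unfolding disjoint_family_on_def by blast
qed

lemma prob_decompose_paths:
  assumes A: "A \<in> sets M"
  shows "prob A = (\<Sum>p\<in>paths. prob (A \<inter> path_event p))"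
proof -
  have "prob (\<Union>p\<in>paths. space M \<inter> path_event p) = (\<Sum>p\<in>paths. prob (space M \<inter> path_event p))"
    by (rule measure_finite_Union)
       (use disjoint_path_events[of "space M"] in \<open>auto simp: finite_paths emeasure_eq_measure\<close>)
  also have "\<dots> = (\<Sum>p\<in>paths. path_prob p)"
    using measure_path_event_emissions[of _ "{}"] by (intro sum.cong refl) (simp add: Int_absorb1)
  finally have "prob (\<Union>p\<in>paths. path_event p) = 1"
    by (simp add: sum_path_prob Int_absorb1)
  moreover have "(\<Union>p\<in>paths. path_event p) \<in> sets M"
    using finite_paths by auto
  ultimately have "AE \<omega> in M. \<omega> \<in> (\<Union>p\<in>paths. path_event p)"
    using AE_in_set_eq_1 by blast
  then have "AE \<omega> in M. \<omega> \<in> A \<longleftrightarrow> \<omega> \<in> (\<Union>p\<in>paths. A \<inter> path_event p)"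
    by auto
  moreover have "(\<Union>p\<in>paths. A \<inter> path_event p) \<in> sets M"
    using A finite_paths by (intro sets.finite_UN) auto
  ultimately have "prob A = prob (\<Union>p\<in>paths. A \<inter> path_event p)"
    using A by (intro measure_eq_AE)
  also have "\<dots> = (\<Sum>p\<in>paths. prob (A \<inter> path_event p))"
    by (rule measure_finite_Union)
       (use A in \<open>auto simp: finite_paths disjoint_path_events emeasure_eq_measure\<close>)
  finally show ?thesis .
qed

lemma prob_Yp:
  assumes t: "t \<in> {1..T}"
  shows "prob {\<omega>\<in>space M. Yp t \<omega> = a} = (\<Sum>p\<in>paths. path_prob p * pmf (path_emis p t) a)"
proof -
  have "{\<omega>\<in>space M. Yp t \<omega> = a} \<inter> path_event p = path_event p \<inter> {\<omega>. \<forall>s\<in>{t}. Yp s \<omega> = a}" for p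
    by (auto simp: path_event_def)
  then show ?thesis
    using t measure_path_event_emissions[of _ "{t}" "\<lambda>_. a"]
    by (subst prob_decompose_paths) (auto intro!: sum.cong)
qed

lemma prob_Yp_pair:
  assumes t: "t \<in> {1..T}" "t' \<in> {1..T}" "t \<noteq> t'"
  shows "prob ({\<omega>\<in>space M. Yp t \<omega> = a} \<inter> {\<omega>\<in>space M. Yp t' \<omega> = b})
     = (\<Sum>p\<in>paths. path_prob p * pmf (path_emis p t) a * pmf (path_emis p t') b)"
proof -
  let ?ys = "\<lambda>s. if s = t then a else b"
  have "({\<omega>\<in>space M. Yp t \<omega> = a} \<inter> {\<omega>\<in>space M. Yp t' \<omega> = b}) \<inter> path_event p
      = path_event p \<inter> {\<omega>. \<forall>s\<in>{t, t'}. Yp s \<omega> = ?ys s}" for p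
    using t by (auto simp: path_event_def)
  then show ?thesis
    using t measure_path_event_emissions[of _ "{t, t'}" ?ys]
    by (subst prob_decompose_paths) (auto intro!: sum.cong simp: mult_ac)
qed


lemma emeasure_Yp:
  assumes "t \<in> {1..T}"
  shows "emeasure M {\<omega>\<in>space M. Yp t \<omega> = a}
       = (\<Sum>p\<in>paths. ennreal (path_prob p) * ennreal (pmf (path_emis p t) a))"
  using assms by (simp add: emeasure_eq_measure prob_Yp path_prob_nonneg ennreal_mult sum_ennreal[symmetric])

lemma emeasure_Yp_pair:
  assumes "t \<in> {1..T}" "t' \<in> {1..T}" "t \<noteq> t'"
  shows "emeasure M ({\<omega>\<in>space M. Yp t \<omega> = a} \<inter> {\<omega>\<in>space M. Yp t' \<omega> = b})
       = (\<Sum>p\<in>paths. ennreal (path_prob p) * (ennreal (pmf (path_emis p t) a) * ennreal (pmf (path_emis p t') b)))"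
  using assms
  by (simp add: emeasure_eq_measure prob_Yp_pair path_prob_nonneg ennreal_mult sum_ennreal[symmetric] mult.assoc)

lemma nn_integral_Yp:
  assumes t: "t \<in> {1..T}" and h: "\<And>x. 0 \<le> h x"
    and hi: "\<And>p. p \<in> paths \<Longrightarrow> integrable (path_emis p t) h"
  shows "(\<integral>\<^sup>+\<omega>. ennreal (h (Yp t \<omega>)) \<partial>M) = ennreal (\<Sum>p\<in>paths. path_prob p * (\<integral>x. h x \<partial>path_emis p t))"
proof -
  have "(\<integral>\<^sup>+\<omega>. ennreal (h (Yp t \<omega>)) \<partial>M) = (\<Sum>a. emeasure M {\<omega>\<in>space M. Yp t \<omega> = a} * ennreal (h a))"
    by (rule nn_integral_nat_valued_fun) simp
  also have "\<dots> = (\<Sum>a. \<Sum>p\<in>paths. ennreal (path_prob p) * (ennreal (pmf (path_emis p t) a) * ennreal (h a)))"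
    using t by (simp add: emeasure_Yp sum_distrib_left mult_ac)
  also have "\<dots> = (\<Sum>p\<in>paths. ennreal (path_prob p) * (\<Sum>a. ennreal (pmf (path_emis p t) a) * ennreal (h a)))"
    by (simp add: suminf_sum[OF summableI])
  also have "\<dots> = ennreal (\<Sum>p\<in>paths. path_prob p * (\<integral>x. h x \<partial>path_emis p t))"
    using hi h by (simp add: suminf_pmf_eq_integral path_prob_nonneg ennreal_mult sum_ennreal[symmetric])
  finally show ?thesis .
qed

lemma nn_integral_Yp_pair:
  assumes t: "t \<in> {1..T}" "t' \<in> {1..T}" "t \<noteq> t'" and h: "\<And>x. 0 \<le> h x" and g: "\<And>x. 0 \<le> g x"
    and hi: "\<And>p. p \<in> paths \<Longrightarrow> integrable (path_emis p t) h"
    and gi: "\<And>p. p \<in> paths \<Longrightarrow> integrable (path_emis p t') g"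
  shows "(\<integral>\<^sup>+\<omega>. ennreal (h (Yp t \<omega>) * g (Yp t' \<omega>)) \<partial>M)
     = ennreal (\<Sum>p\<in>paths. path_prob p * (\<integral>x. h x \<partial>path_emis p t) * (\<integral>x. g x \<partial>path_emis p t'))"
proof -
  let ?A = "\<lambda>a. {\<omega>\<in>space M. Yp t \<omega> = a}"
  let ?P = "\<lambda>p s a. ennreal (pmf (path_emis p s) a)"
  have "(\<integral>\<^sup>+\<omega>. ennreal (h (Yp t \<omega>) * g (Yp t' \<omega>)) \<partial>M)
      = (\<Sum>a. \<integral>\<^sup>+\<omega>. ennreal (h a) * ennreal (g (Yp t' \<omega>)) * indicator (?A a) \<omega> \<partial>M)"
    using nn_integral_nat_valued[of "Yp t" M "\<lambda>a \<omega>. ennreal (h a) * ennreal (g (Yp t' \<omega>))"] h g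
    by (simp add: ennreal_mult)
  also have "\<dots> = (\<Sum>a. ennreal (h a) * \<integral>\<^sup>+\<omega>. ennreal (g (Yp t' \<omega>)) * indicator (?A a) \<omega> \<partial>M)"
    by (simp add: mult.assoc nn_integral_cmult)
  also have "\<dots> = (\<Sum>a. ennreal (h a) * (\<Sum>b. ennreal (g b) * emeasure M (?A a \<inter> {\<omega>\<in>space M. Yp t' \<omega> = b})))"
    by (intro suminf_cong arg_cong2[where f = "(*)"] refl nn_integral_nat_valued_indicator) measurable
  also have "\<dots> = (\<Sum>a. \<Sum>b. \<Sum>p\<in>paths. ennreal (path_prob p) * ((?P p t a * ennreal (h a)) * (?P p t' b * ennreal (g b))))"
    using t by (simp add: emeasure_Yp_pair sum_distrib_left mult_ac flip: ennreal_suminf_cmult)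
  also have "\<dots> = (\<Sum>p\<in>paths. ennreal (path_prob p) * ((\<Sum>a. ?P p t a * ennreal (h a)) * (\<Sum>b. ?P p t' b * ennreal (g b))))"
    by (simp only: suminf_sum[OF summableI] suminf_mult_suminf_ennreal)
  also have "\<dots> = ennreal (\<Sum>p\<in>paths. path_prob p * (\<integral>x. h x \<partial>path_emis p t) * (\<integral>x. g x \<partial>path_emis p t'))"
    using hi gi h g
    by (simp add: suminf_pmf_eq_integral path_prob_nonneg ennreal_mult sum_ennreal[symmetric] mult.assoc)
  finally show ?thesis .
qed

lemma integrable_emis:
  "integrable (measure_pmf (emis p00 p10 z x')) real"
  "integrable (measure_pmf (emis p00 p10 z x')) (\<lambda>n. (real n)\<^sup>2)"
  using mom1 mom2 by (simp_all add: emis_def integrable_measure_pmf_finite)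

lemma integral_Yp_forward:
  assumes t: "t \<in> {1..T}" and h: "\<And>x. 0 \<le> h x"
    and hi: "\<And>z x'. integrable (measure_pmf (emis p00 p10 z x')) h"
  shows "integrable M (\<lambda>\<omega>. h (Yp t \<omega>)) \<and> expectation (\<lambda>\<omega>. h (Yp t \<omega>))
    = (\<Sum>z\<le>r. forward r q (\<lambda>s z x'. if s = t then (\<integral>n. h n \<partial>emis p00 p10 z x') else 1) \<nu> T z)"
    (is "_ \<and> _ = ?rhs")
proof -
  let ?S = "\<Sum>p\<in>paths. path_prob p * (\<integral>x. h x \<partial>path_emis p t)"
  have "0 \<le> ?S" using h by (intro sum_nonneg mult_nonneg_nonneg path_prob_nonneg integral_nonneg) auto
  moreover have "(\<integral>\<^sup>+\<omega>. ennreal (h (Yp t \<omega>)) \<partial>M) = ennreal ?S"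
    by (rule nn_integral_Yp[OF t h]) (simp add: path_emis_def hi)
  ultimately have "integrable M (\<lambda>\<omega>. h (Yp t \<omega>)) \<and> expectation (\<lambda>\<omega>. h (Yp t \<omega>)) = ?S"
    using nn_integral_eq_integrable[of "\<lambda>\<omega>. h (Yp t \<omega>)" M ?S] h by simp
  also have "?S = (\<Sum>p\<in>paths. path_prob p * (\<Prod>s\<in>{1..T}.
      (\<lambda>s z x'. if s = t then (\<integral>n. h n \<partial>emis p00 p10 z x') else 1) s (fst p s) (snd p s)))"
    using t by (intro sum.cong refl) (simp add: path_emis_def)
  also have "\<dots> = ?rhs"
    by (rule sum_path_prob_forward)
  finally show ?thesis .
qed

lemma integral_Yp_pair_forward:
  assumes t: "t \<in> {1..T}" "t' \<in> {1..T}" "t \<noteq> t'" and h: "\<And>x. 0 \<le> h x" and g: "\<And>x. 0 \<le> g x"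
    and hi: "\<And>z x'. integrable (measure_pmf (emis p00 p10 z x')) h"
    and gi: "\<And>z x'. integrable (measure_pmf (emis p00 p10 z x')) g"
  shows "integrable M (\<lambda>\<omega>. h (Yp t \<omega>) * g (Yp t' \<omega>)) \<and> expectation (\<lambda>\<omega>. h (Yp t \<omega>) * g (Yp t' \<omega>))
    = (\<Sum>z\<le>r. forward r q (\<lambda>s z x'. if s = t then (\<integral>n. h n \<partial>emis p00 p10 z x')
         else if s = t' then (\<integral>n. g n \<partial>emis p00 p10 z x') else 1) \<nu> T z)"
    (is "_ \<and> _ = ?rhs")
proof -
  let ?\<Phi> = "\<lambda>s z x'. if s = t then (\<integral>n. h n \<partial>emis p00 p10 z x')
         else if s = t' then (\<integral>n. g n \<partial>emis p00 p10 z x') else 1"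
  let ?S = "\<Sum>p\<in>paths. path_prob p * (\<integral>x. h x \<partial>path_emis p t) * (\<integral>x. g x \<partial>path_emis p t')"
  have "0 \<le> ?S" using h g by (intro sum_nonneg mult_nonneg_nonneg path_prob_nonneg integral_nonneg) auto
  moreover have "(\<integral>\<^sup>+\<omega>. ennreal (h (Yp t \<omega>) * g (Yp t' \<omega>)) \<partial>M) = ennreal ?S"
    by (rule nn_integral_Yp_pair[OF t h g]) (simp_all add: path_emis_def hi gi)
  ultimately have "integrable M (\<lambda>\<omega>. h (Yp t \<omega>) * g (Yp t' \<omega>))
      \<and> expectation (\<lambda>\<omega>. h (Yp t \<omega>) * g (Yp t' \<omega>)) = ?S"
    using nn_integral_eq_integrable[of "\<lambda>\<omega>. h (Yp t \<omega>) * g (Yp t' \<omega>)" M ?S] h g by simp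
  also have "?S = (\<Sum>p\<in>paths. path_prob p * (\<Prod>s\<in>{1..T}. ?\<Phi> s (fst p s) (snd p s)))"
  proof (intro sum.cong refl)
    fix p
    have "(\<Prod>s\<in>{1..T}. ?\<Phi> s (fst p s) (snd p s))
      = (\<Prod>s\<in>{1..T}. (if s = t then (\<integral>n. h n \<partial>path_emis p t) else 1)
                      * (if s = t' then (\<integral>n. g n \<partial>path_emis p t') else 1))"
      using t by (intro prod.cong refl) (auto simp: path_emis_def)
    also have "\<dots> = (\<integral>n. h n \<partial>path_emis p t) * (\<integral>n. g n \<partial>path_emis p t')"
      using t by (simp add: prod.distrib)
    finally show "path_prob p * (\<integral>x. h x \<partial>path_emis p t) * (\<integral>x. g x \<partial>path_emis p t')
        = path_prob p * (\<Prod>s\<in>{1..T}. ?\<Phi> s (fst p s) (snd p s))" by simp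
  qed
  also have "\<dots> = ?rhs"
    by (rule sum_path_prob_forward)
  finally show ?thesis .
qed

lemma pmf_mean_emis_off: "x' \<noteq> 0 \<Longrightarrow> pmf_mean (emis p00 p10 z x') = 0"
  by (simp add: emis_def pmf_mean_def)

lemma pmf_mom2_emis_off: "x' \<noteq> 0 \<Longrightarrow> pmf_mom2 (emis p00 p10 z x') = 0"
  by (simp add: emis_def pmf_mom2_def)

lemma Yp_mean:
  assumes t: "t \<in> {1..T}"
  shows "integrable M (\<lambda>\<omega>. real (Yp t \<omega>))
    \<and> expectation (\<lambda>\<omega>. real (Yp t \<omega>)) = theta1 r q p00 p10 * on_prob r q \<nu> t"
proof -
  have "(\<Sum>z\<le>r. forward r q (\<lambda>s z x'. if s = t then pmf_mean (emis p00 p10 z x') else 1) \<nu> T z)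
      = theta1 r q p00 p10 * on_prob r q \<nu> t"
    unfolding on_prob_def theta1_def
    by (rule forward_mass_one_emission[where q = q, OF q_sum _ _ q00_nonzero]) (use t pmf_mean_emis_off in auto)
  then show ?thesis
    using integral_Yp_forward[OF t, of real] integrable_emis unfolding pmf_mean_def by simp
qed

lemma Yp_second_moment:
  assumes t: "t \<in> {1..T}"
  shows "integrable M (\<lambda>\<omega>. (real (Yp t \<omega>))\<^sup>2)
    \<and> expectation (\<lambda>\<omega>. (real (Yp t \<omega>))\<^sup>2) = on_mom2 r q p00 p10 * on_prob r q \<nu> t"
proof -
  have "(\<Sum>z\<le>r. forward r q (\<lambda>s z x'. if s = t then pmf_mom2 (emis p00 p10 z x') else 1) \<nu> T z)
      = on_mom2 r q p00 p10 * on_prob r q \<nu> t"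
    unfolding on_prob_def on_mom2_def
    by (rule forward_mass_one_emission[where q = q, OF q_sum _ _ q00_nonzero]) (use t pmf_mom2_emis_off in auto)
  then show ?thesis
    using integral_Yp_forward[OF t, of "\<lambda>n. (real n)\<^sup>2"] integrable_emis unfolding pmf_mom2_def by simp
qed

lemma Yp_cross_moment:
  assumes t: "1 \<le> t'" "t' < t" "t \<le> T"
  shows "integrable M (\<lambda>\<omega>. real (Yp t \<omega>) * real (Yp t' \<omega>))
    \<and> expectation (\<lambda>\<omega>. real (Yp t \<omega>) * real (Yp t' \<omega>)) = theta1 r q p00 p10 * joint_on r q \<nu> p00 p10 t t'"
proof -
  have "(\<Sum>z\<le>r. forward r q (\<lambda>s z x'. if s = t then pmf_mean (emis p00 p10 z x')
          else if s = t' then pmf_mean (emis p00 p10 z x') else 1) \<nu> T z)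
      = theta1 r q p00 p10 * joint_on r q \<nu> p00 p10 t t'"
    unfolding joint_on_def on_prob_def theta1_def
    by (rule forward_mass_two_emissions[where q = q, OF q_sum t q00_nonzero]) (use pmf_mean_emis_off in auto)
  moreover have "t \<in> {1..T}" "t' \<in> {1..T}" "t \<noteq> t'" using t by auto
  ultimately show ?thesis
    using integral_Yp_pair_forward[of t t' real real] integrable_emis unfolding pmf_mean_def by simp
qed

end

section \<open>The observation model\<close>

locale htmm_observation = prob_space M for M :: "'a measure" +
  fixes r T m :: nat
    and q :: "nat \<Rightarrow> nat \<Rightarrow> real"
    and \<nu> :: "nat \<Rightarrow> real"
    and p00 p10 :: "nat pmf"
    and X Xp Yp :: "nat \<Rightarrow> nat \<Rightarrow> 'a \<Rightarrow> nat"
    and U :: "nat \<Rightarrow> nat \<Rightarrow> 'a \<Rightarrow> real"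
    and eps :: "nat \<Rightarrow> 'a \<Rightarrow> real"
    and \<sigma> :: "nat \<Rightarrow> real"
    and u c ofs :: real
  assumes m_pos: "1 \<le> m"
    and q_range: "\<And>x z. x \<le> r \<Longrightarrow> z \<le> r - 1 \<Longrightarrow> 0 \<le> q x z \<and> q x z \<le> 1"
    and q_sum: "\<And>z. z \<le> r - 1 \<Longrightarrow> (\<Sum>x\<le>r. q x z) = 1"
    and nu_nonneg: "\<And>z. z \<le> r \<Longrightarrow> 0 \<le> \<nu> z"
    and nu_sum: "(\<Sum>z\<le>r. \<nu> z) = 1"
    and q00: "0 < q 0 0" "q 0 0 < 1"
    and th1_pos: "0 < theta1 r q p00 p10"
    and mgf: "mgf_finite_near0 p00" "mgf_finite_near0 p10"
    and X_meas: "\<And>k t. X k t \<in> measurable M (count_space UNIV)"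
    and Xp_meas: "\<And>k t. Xp k t \<in> measurable M (count_space UNIV)"
    and Yp_meas[measurable]: "\<And>k t. Yp k t \<in> measurable M (count_space UNIV)"
    and law: "\<And>k xs xps ys. k \<in> {1..m} \<Longrightarrow> (\<forall>t\<le>T. xs t \<le> r) \<Longrightarrow> (\<forall>t\<in>{1..T}. xps t \<le> r) \<Longrightarrow>
       measure M {\<omega> \<in> space M. \<forall>t\<le>T. X k t \<omega> = xs t \<and>
                      (1 \<le> t \<longrightarrow> Xp k t \<omega> = xps t \<and> Yp k t \<omega> = ys t)}
       = \<nu> (xs 0) * (\<Prod>t\<in>{1..T}. Ml r q (xps t) (xs (t - 1)) * Ms q (xs t) (xps t)
                                 * pmf (emis p00 p10 (xs t) (xps t)) (ys t))"
    and U_meas[measurable]: "\<And>t k. U t k \<in> borel_measurable M"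
    and U_nonneg: "\<And>t k \<omega>. 1 \<le> t \<Longrightarrow> 1 \<le> k \<Longrightarrow> \<omega> \<in> space M \<Longrightarrow> 0 \<le> U t k \<omega>"
    and U_ident: "\<And>t k. 1 \<le> t \<Longrightarrow> 1 \<le> k \<Longrightarrow> distr M borel (U t k) = distr M borel (U 1 1)"
    and U_int: "integrable M (U 1 1)" "integrable M (\<lambda>\<omega>. (U 1 1 \<omega>)\<^sup>2)"
    and U_mean: "integral\<^sup>L M (U 1 1) = u" and u_pos: "0 < u"
    and eps_meas[measurable]: "\<And>t. eps t \<in> borel_measurable M"
    and eps_int: "\<And>t. t \<in> {1..T} \<Longrightarrow> integrable M (\<lambda>\<omega>. (eps t \<omega>)\<^sup>2)"
    and eps_mean: "\<And>t. t \<in> {1..T} \<Longrightarrow> integral\<^sup>L M (eps t) = 0"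
    and eps_var: "\<And>t. t \<in> {1..T} \<Longrightarrow> prob_space.variance M (eps t) = (\<sigma> t)\<^sup>2"
    and indep: "prob_space.indep_sets M (src_sigma M T X Xp Yp U eps) (src_index m T)"
    and c_pos: "0 < c"
begin

abbreviation "th1 \<equiv> theta1 r q p00 p10"
abbreviation "P t \<equiv> on_prob r q \<nu> t"
abbreviation "N t \<omega> \<equiv> photon_sum Yp m t \<omega>"
abbreviation "sources \<equiv> src_sigma M T X Xp Yp U eps"

lemma fluorophore: "k \<in> {1..m} \<Longrightarrow> single_fluorophore M r T q \<nu> p00 p10 (X k) (Xp k) (Yp k)"
  by unfold_locales
     (use q_range q_sum q00 nu_nonneg nu_sum X_meas Xp_meas Yp_meas law
          mgf_finite_near0_moments[OF mgf(1)] mgf_finite_near0_moments[OF mgf(2)] in auto)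

lemma indep_sources: "indep_sets sources (src_index m T)"
  using indep by simp

lemma sources_subset_Pow: "sources i \<subseteq> Pow (space M)"
proof (cases i)
  case (Fluo k)
  have "fluo_gen M T X Xp Yp k \<subseteq> Pow (space M)" unfolding fluo_gen_def by auto
  then show ?thesis using Fluo by (auto simp: src_sigma_def dest: sigma_sets_into_sp)
qed (auto simp: src_sigma_def)

lemma Int_stable_vimages: "Int_stable {f -` A \<inter> space M | A. A \<in> sets borel}"
proof (rule Int_stableI, clarsimp)
  fix A B :: "'b set" assume "A \<in> sets borel" "B \<in> sets borel"
  then show "\<exists>C. f -` A \<inter> space M \<inter> (f -` B \<inter> space M) = f -` C \<inter> space M \<and> C \<in> sets borel"
    by (intro exI[of _ "A \<inter> B"]) auto
qed

lemma Int_stable_sources: "Int_stable (sources i)"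
proof (cases i)
  case (Fluo k)
  have "fluo_gen M T X Xp Yp k \<subseteq> Pow (space M)" unfolding fluo_gen_def by auto
  then have "sigma_algebra (space M) (sigma_sets (space M) (fluo_gen M T X Xp Yp k))"
    by (rule sigma_algebra_sigma_sets)
  then have "algebra (space M) (sigma_sets (space M) (fluo_gen M T X Xp Yp k))"
    by (simp add: sigma_algebra_def ring_of_sets_def algebra_iff_Int)
  then show ?thesis using Fluo by (simp add: src_sigma_def algebra.Int_stable)
qed (simp_all add: src_sigma_def Int_stable_vimages)

lemma indep_blocks:
  fixes I :: "nat \<Rightarrow> src set"
  assumes "\<And>j. j \<in> J \<Longrightarrow> I j \<subseteq> src_index m T" "disjoint_family_on I J"
  shows "indep_sets (\<lambda>j. sigma_sets (space M) (\<Union>i\<in>I j. sources i)) J"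
proof (rule indep_sets_collect_sigma)
  show "indep_sets sources (\<Union>j\<in>J. I j)"
    by (rule indep_sets_mono_index[OF _ indep_sources]) (use assms in auto)
qed (use assms Int_stable_sources in auto)

lemma blocks_subset_Pow: "(\<Union>i\<in>I. sources i) \<subseteq> Pow (space M)"
  using sources_subset_Pow by auto

lemma measurable_block:
  assumes "i \<in> I" "{f -` A \<inter> space M | A. A \<in> sets K} \<subseteq> sources i" "\<And>\<omega>. f \<omega> \<in> space K"
  shows "f \<in> measurable (sigma (space M) (\<Union>i\<in>I. sources i)) K"
proof (rule measurableI)
  fix A assume "A \<in> sets K"
  then have "f -` A \<inter> space M \<in> (\<Union>i\<in>I. sources i)" using assms(1,2) by blast
  then show "f -` A \<inter> space (sigma (space M) (\<Union>i\<in>I. sources i)) \<in> sets (sigma (space M) (\<Union>i\<in>I. sources i))"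
    using blocks_subset_Pow by (simp add: sets_measure_of space_measure_of_conv)
qed (use assms(3) in auto)

lemma vimage_Yp_sources:
  assumes "t \<in> {1..T}"
  shows "{(\<lambda>\<omega>. f (Yp k t \<omega>)) -` A \<inter> space M | A. A \<in> sets K} \<subseteq> sources (Fluo k)"
proof -
  have "{(\<lambda>\<omega>. f (Yp k t \<omega>)) -` A \<inter> space M | A. A \<in> sets K} \<subseteq> fluo_gen M T X Xp Yp k"
    using assms unfolding fluo_gen_def by (auto intro!: exI[of _ "f -` _"])
  then show ?thesis by (auto simp: src_sigma_def)
qed

lemma vimage_U_sources: "{U t j -` A \<inter> space M | A. A \<in> sets borel} \<subseteq> sources (Unoise t j)"
  by (simp add: src_sigma_def)

lemma vimage_eps_sources: "{eps t -` A \<inter> space M | A. A \<in> sets borel} \<subseteq> sources (Enoise t)"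
  by (simp add: src_sigma_def)

lemma Yk_mean:
  assumes "k \<in> {1..m}" "t \<in> {1..T}"
  shows "integrable M (\<lambda>\<omega>. real (Yp k t \<omega>)) \<and> expectation (\<lambda>\<omega>. real (Yp k t \<omega>)) = th1 * P t"
  using single_fluorophore.Yp_mean[OF fluorophore] assms by blast

lemma Yk_second_moment:
  assumes "k \<in> {1..m}" "t \<in> {1..T}"
  shows "integrable M (\<lambda>\<omega>. (real (Yp k t \<omega>))\<^sup>2)
    \<and> expectation (\<lambda>\<omega>. (real (Yp k t \<omega>))\<^sup>2) = on_mom2 r q p00 p10 * P t"
  using single_fluorophore.Yp_second_moment[OF fluorophore] assms by blast

lemma Yk_cross_moment:
  assumes "k \<in> {1..m}" "1 \<le> t'" "t' < t" "t \<le> T"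
  shows "integrable M (\<lambda>\<omega>. real (Yp k t \<omega>) * real (Yp k t' \<omega>))
    \<and> expectation (\<lambda>\<omega>. real (Yp k t \<omega>) * real (Yp k t' \<omega>)) = th1 * joint_on r q \<nu> p00 p10 t t'"
  using single_fluorophore.Yp_cross_moment[OF fluorophore] assms by blast

lemma Yk_Yl_indep_moment:
  assumes kl: "k \<in> {1..m}" "l \<in> {1..m}" "k \<noteq> l" and t: "t \<in> {1..T}" "t' \<in> {1..T}"
  shows "integrable M (\<lambda>\<omega>. real (Yp k t \<omega>) * real (Yp l t' \<omega>))
    \<and> expectation (\<lambda>\<omega>. real (Yp k t \<omega>) * real (Yp l t' \<omega>)) = (th1 * P t) * (th1 * P t')"
proof -
  have "integrable M (\<lambda>\<omega>. real (Yp k t \<omega>) * real (Yp l t' \<omega>))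
     \<and> expectation (\<lambda>\<omega>. real (Yp k t \<omega>) * real (Yp l t' \<omega>))
       = expectation (\<lambda>\<omega>. real (Yp k t \<omega>)) * expectation (\<lambda>\<omega>. real (Yp l t' \<omega>))"
  proof (rule indep_sets_integral_mult[OF indep_sources])
    show "Fluo k \<in> src_index m T" "Fluo l \<in> src_index m T" "Fluo k \<noteq> Fluo l"
      using kl by (auto simp: src_index_def)
    show "{(\<lambda>\<omega>. real (Yp k t \<omega>)) -` A \<inter> space M |A. A \<in> sets borel} \<subseteq> sources (Fluo k)"
      "{(\<lambda>\<omega>. real (Yp l t' \<omega>)) -` A \<inter> space M |A. A \<in> sets borel} \<subseteq> sources (Fluo l)"
      using t by (simp_all add: vimage_Yp_sources)
  qed (use Yk_mean kl t in auto)
  then show ?thesis using Yk_mean kl t by simp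
qed

lemma real_N: "real (N t \<omega>) = (\<Sum>k\<in>{1..m}. real (Yp k t \<omega>))"
  by (simp add: photon_sum_def)

lemma N_measurable[measurable]: "(\<lambda>\<omega>. N t \<omega>) \<in> measurable M (count_space UNIV)"
  unfolding photon_sum_def by measurable

lemma N_mean:
  assumes t: "t \<in> {1..T}"
  shows "integrable M (\<lambda>\<omega>. real (N t \<omega>)) \<and> expectation (\<lambda>\<omega>. real (N t \<omega>)) = real m * (th1 * P t)"
proof -
  have "integrable M (\<lambda>\<omega>. \<Sum>k\<in>{1..m}. real (Yp k t \<omega>))"
    using Yk_mean[OF _ t] by (intro Bochner_Integration.integrable_sum) blast
  moreover have "expectation (\<lambda>\<omega>. \<Sum>k\<in>{1..m}. real (Yp k t \<omega>)) = (\<Sum>k\<in>{1..m}. th1 * P t)"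
    using Yk_mean[OF _ t] by (subst Bochner_Integration.integral_sum) auto
  ultimately show ?thesis by (simp add: real_N)
qed

lemma N_second_moment:
  assumes t: "t \<in> {1..T}"
  shows "integrable M (\<lambda>\<omega>. (real (N t \<omega>))\<^sup>2) \<and> expectation (\<lambda>\<omega>. (real (N t \<omega>))\<^sup>2)
     = real m * (on_mom2 r q p00 p10 * P t) + real m * (real m - 1) * ((th1 * P t) * (th1 * P t))"
proof -
  have "integrable M (\<lambda>\<omega>. (\<Sum>k\<in>{1..m}. real (Yp k t \<omega>)) * (\<Sum>l\<in>{1..m}. real (Yp l t \<omega>))) \<and>
     expectation (\<lambda>\<omega>. (\<Sum>k\<in>{1..m}. real (Yp k t \<omega>)) * (\<Sum>l\<in>{1..m}. real (Yp l t \<omega>)))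
     = real (card {1..m}) * (on_mom2 r q p00 p10 * P t)
       + real (card {1..m}) * (real (card {1..m}) - 1) * ((th1 * P t) * (th1 * P t))"
    by (rule integral_sum_mult_sum)
       (use Yk_second_moment[OF _ t] Yk_Yl_indep_moment[OF _ _ _ t t] in \<open>auto simp: power2_eq_square\<close>)
  then show ?thesis by (simp add: real_N power2_eq_square)
qed

lemma N_cross_moment:
  assumes t: "1 \<le> t'" "t' < t" "t \<le> T"
  shows "integrable M (\<lambda>\<omega>. real (N t \<omega>) * real (N t' \<omega>)) \<and> expectation (\<lambda>\<omega>. real (N t \<omega>) * real (N t' \<omega>))
     = real m * (th1 * joint_on r q \<nu> p00 p10 t t') + real m * (real m - 1) * ((th1 * P t) * (th1 * P t'))"
proof -
  have "integrable M (\<lambda>\<omega>. (\<Sum>k\<in>{1..m}. real (Yp k t \<omega>)) * (\<Sum>l\<in>{1..m}. real (Yp l t' \<omega>))) \<and>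
     expectation (\<lambda>\<omega>. (\<Sum>k\<in>{1..m}. real (Yp k t \<omega>)) * (\<Sum>l\<in>{1..m}. real (Yp l t' \<omega>)))
     = real (card {1..m}) * (th1 * joint_on r q \<nu> p00 p10 t t')
       + real (card {1..m}) * (real (card {1..m}) - 1) * ((th1 * P t) * (th1 * P t'))"
    by (rule integral_sum_mult_sum) (use Yk_cross_moment[OF _ t] Yk_Yl_indep_moment t in auto)
  then show ?thesis by (simp add: real_N)
qed


definition "s2 = expectation (\<lambda>\<omega>. (U 1 1 \<omega>)\<^sup>2)"

lemma U_moments:
  assumes "1 \<le> t" "1 \<le> j"
  shows "integrable M (U t j) \<and> expectation (U t j) = u"
    and "integrable M (\<lambda>\<omega>. (U t j \<omega>)\<^sup>2) \<and> expectation (\<lambda>\<omega>. (U t j \<omega>)\<^sup>2) = s2"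
proof -
  have same_law: "integrable M (\<lambda>\<omega>. f (U t j \<omega>)) = integrable M (\<lambda>\<omega>. f (U 1 1 \<omega>)) \<and>
         expectation (\<lambda>\<omega>. f (U t j \<omega>)) = expectation (\<lambda>\<omega>. f (U 1 1 \<omega>))"
    if f: "f \<in> borel_measurable borel" for f :: "real \<Rightarrow> real"
    using integrable_distr_eq[OF U_meas f] integral_distr[OF U_meas f] U_ident[OF assms] by metis
  show "integrable M (U t j) \<and> expectation (U t j) = u"
    using same_law[of "\<lambda>x. x"] U_int U_mean by simp
  show "integrable M (\<lambda>\<omega>. (U t j \<omega>)\<^sup>2) \<and> expectation (\<lambda>\<omega>. (U t j \<omega>)\<^sup>2) = s2"
    using same_law[of "\<lambda>x. x\<^sup>2"] U_int s2_def by simp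
qed

lemma U_indep_moment:
  assumes "1 \<le> t" "1 \<le> i" "1 \<le> j" "i \<noteq> j"
  shows "integrable M (\<lambda>\<omega>. U t i \<omega> * U t j \<omega>) \<and> expectation (\<lambda>\<omega>. U t i \<omega> * U t j \<omega>) = u * u"
proof -
  have "integrable M (\<lambda>\<omega>. U t i \<omega> * U t j \<omega>)
      \<and> expectation (\<lambda>\<omega>. U t i \<omega> * U t j \<omega>) = expectation (U t i) * expectation (U t j)"
    by (rule indep_sets_integral_mult[OF indep_sources, of "Unoise t i" "Unoise t j"])
       (use assms vimage_U_sources U_moments(1) in \<open>auto simp: src_index_def\<close>)
  then show ?thesis using U_moments(1) assms by simp
qed

definition "Usum t n \<omega> = (\<Sum>i\<in>{1..n}. U t i \<omega>)"

lemma Usum_measurable[measurable]: "Usum t n \<in> borel_measurable M"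
  unfolding Usum_def by measurable

lemma Usum_nonneg: "1 \<le> t \<Longrightarrow> \<omega> \<in> space M \<Longrightarrow> 0 \<le> Usum t n \<omega>"
  unfolding Usum_def using U_nonneg by (auto intro!: sum_nonneg)

lemma Eproc_eq_Usum: "Eproc U Yp m t \<omega> = Usum t (N t \<omega>) \<omega>"
  by (simp add: Eproc_def Usum_def)

lemma Eproc_nonneg: "1 \<le> t \<Longrightarrow> \<omega> \<in> space M \<Longrightarrow> 0 \<le> Eproc U Yp m t \<omega>"
  by (simp add: Eproc_eq_Usum Usum_nonneg)

lemma Eproc_measurable[measurable]: "Eproc U Yp m t \<in> borel_measurable M"
  unfolding Eproc_def photon_sum_def by measurable

lemma nn_integral_Usum: "1 \<le> t \<Longrightarrow> (\<integral>\<^sup>+\<omega>. ennreal (Usum t n \<omega>) \<partial>M) = ennreal (real n * u)"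
proof -
  assume t: "1 \<le> t"
  have "integrable M (\<lambda>\<omega>. \<Sum>i\<in>{1..n}. U t i \<omega>)"
    using U_moments(1) t by (intro Bochner_Integration.integrable_sum) auto
  moreover have "expectation (\<lambda>\<omega>. \<Sum>i\<in>{1..n}. U t i \<omega>) = (\<Sum>i\<in>{1..n}. u)"
    using U_moments(1) t by (subst Bochner_Integration.integral_sum) auto
  ultimately show ?thesis
    using nn_integral_eq_integrable[of "Usum t n" M "real n * u"] Usum_nonneg[OF t] u_pos
    by (simp add: Usum_def[abs_def])
qed

lemma nn_integral_Usum_sq:
  assumes t: "1 \<le> t"
  shows "(\<integral>\<^sup>+\<omega>. ennreal ((Usum t n \<omega>)\<^sup>2) \<partial>M) = ennreal (real n * s2 + real n * (real n - 1) * (u * u))"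
proof -
  have "integrable M (\<lambda>\<omega>. (\<Sum>i\<in>{1..n}. U t i \<omega>) * (\<Sum>j\<in>{1..n}. U t j \<omega>)) \<and>
     expectation (\<lambda>\<omega>. (\<Sum>i\<in>{1..n}. U t i \<omega>) * (\<Sum>j\<in>{1..n}. U t j \<omega>))
     = real (card {1..n}) * s2 + real (card {1..n}) * (real (card {1..n}) - 1) * (u * u)"
    by (rule integral_sum_mult_sum)
       (use U_moments(2)[OF t] U_indep_moment[OF t] in \<open>auto simp: power2_eq_square\<close>)
  moreover have "0 \<le> real n * s2 + real n * (real n - 1) * (u * u)"
    by (cases n) (auto simp: s2_def intro!: add_nonneg_nonneg mult_nonneg_nonneg)
  ultimately show ?thesis
    using nn_integral_eq_integrable[of "\<lambda>\<omega>. (Usum t n \<omega>)\<^sup>2" M] by (simp add: Usum_def power2_eq_square)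
qed

text \<open>Blocks of sources: block \<open>0\<close> carries the photon counts, blocks \<open>1\<close> and \<open>2\<close> the
  amplification factors at times \<open>t\<close> and \<open>t'\<close>.\<close>

definition "noise_blocks t t' (j::nat) = (if j = 0 then Fluo ` {1..m}
     else if j = 1 then {Unoise t i | i. 1 \<le> i} else {Unoise t' i | i. 1 \<le> i})"

lemma N_measurable_block:
  assumes I: "Fluo ` {1..m} \<subseteq> I" and t: "t \<in> {1..T}"
  shows "(\<lambda>\<omega>. N t \<omega>) \<in> measurable (sigma (space M) (\<Union>i\<in>I. sources i)) (count_space UNIV)"
proof -
  define Y where "Y k = (if k \<in> {1..m} then Yp k t else (\<lambda>_. 0))" for k
  have [measurable]: "Y k \<in> measurable (sigma (space M) (\<Union>i\<in>I. sources i)) (count_space UNIV)" for k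
  proof (cases "k \<in> {1..m}")
    case True
    have "{Yp k t -` A \<inter> space M | A. A \<in> sets (count_space UNIV)} \<subseteq> sources (Fluo k)"
      using vimage_Yp_sources[OF t, of "\<lambda>x. x" k "count_space UNIV"] by simp
    then show ?thesis
      unfolding Y_def using True I by (intro measurable_block[of "Fluo k"]) auto
  next
    case False
    then have "Y k = (\<lambda>_. 0)" by (auto simp: Y_def)
    then show ?thesis by simp
  qed
  have "(\<lambda>\<omega>. N t \<omega>) = (\<lambda>\<omega>. \<Sum>k\<in>{1..m}. Y k \<omega>)"
    by (auto simp: photon_sum_def Y_def)
  also have "\<dots> \<in> measurable (sigma (space M) (\<Union>i\<in>I. sources i)) (count_space UNIV)"
    by measurable
  finally show ?thesis .
qed

lemma Usum_measurable_block:
  assumes "\<And>i. 1 \<le> i \<Longrightarrow> Unoise t i \<in> I"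
  shows "Usum t n \<in> measurable (sigma (space M) (\<Union>i\<in>I. sources i)) borel"
proof -
  define V where "V i = (if 1 \<le> i then U t i else (\<lambda>_. 0))" for i
  have [measurable]: "V i \<in> measurable (sigma (space M) (\<Union>i\<in>I. sources i)) borel" for i
  proof (cases "1 \<le> i")
    case True
    have "U t i \<in> measurable (sigma (space M) (\<Union>i\<in>I. sources i)) borel"
      by (rule measurable_block[of "Unoise t i"]) (use True assms vimage_U_sources in auto)
    then show ?thesis by (simp add: V_def True)
  qed (simp add: V_def)
  have "Usum t n = (\<lambda>\<omega>. \<Sum>i\<in>{1..n}. V i \<omega>)"
    by (auto simp: Usum_def V_def)
  also have "\<dots> \<in> measurable (sigma (space M) (\<Union>i\<in>I. sources i)) borel"
    by measurable
  finally show ?thesis .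
qed

lemma nn_integral_Eproc:
  assumes t: "t \<in> {1..T}" and h: "h \<in> borel_measurable borel"
  shows "(\<integral>\<^sup>+\<omega>. ennreal (h (Eproc U Yp m t \<omega>)) \<partial>M)
      = (\<Sum>n. emeasure M {\<omega>\<in>space M. N t \<omega> = n} * (\<integral>\<^sup>+\<omega>. ennreal (h (Usum t n \<omega>)) \<partial>M))"
proof -
  let ?G = "\<lambda>j. \<Union>i\<in>noise_blocks t t j. sources i"
  have "(\<integral>\<^sup>+\<omega>. (\<Prod>j\<in>{1::nat}. ennreal (h (Usum t (N t \<omega>) \<omega>))) \<partial>M)
      = (\<Sum>n. emeasure M {\<omega>\<in>space M. N t \<omega> = n} * (\<Prod>j\<in>{1::nat}. \<integral>\<^sup>+\<omega>. ennreal (h (Usum t n \<omega>)) \<partial>M))"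
  proof (rule nn_integral_random_index_indep[where G = ?G and N = "\<lambda>\<omega>. N t \<omega>"
        and F = "\<lambda>_ n \<omega>. ennreal (h (Usum t n \<omega>))", OF _ _ _ blocks_subset_Pow])
    show "indep_sets (\<lambda>j. sigma_sets (space M) (?G j)) (insert 0 {1})"
      using t by (intro indep_blocks) (auto simp: noise_blocks_def src_index_def disjoint_family_on_def)
    show "(\<lambda>\<omega>. N t \<omega>) \<in> measurable (sigma (space M) (?G 0)) (count_space UNIV)"
      using t by (intro N_measurable_block) (auto simp: noise_blocks_def)
    fix j n assume "j \<in> {1::nat}"
    have "Usum t n \<in> measurable (sigma (space M) (?G j)) borel"
      using \<open>j \<in> {1}\<close> by (intro Usum_measurable_block) (auto simp: noise_blocks_def)
    then show "(\<lambda>\<omega>. ennreal (h (Usum t n \<omega>))) \<in> measurable (sigma (space M) (?G j)) borel"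
      using h by measurable
  qed (use h in auto)
  then show ?thesis by (simp add: Eproc_eq_Usum)
qed

lemma nn_integral_Eproc_pair:
  assumes t: "t \<in> {1..T}" "t' \<in> {1..T}" "t \<noteq> t'"
  shows "(\<integral>\<^sup>+\<omega>. ennreal (Eproc U Yp m t \<omega> * Eproc U Yp m t' \<omega>) \<partial>M)
      = (\<integral>\<^sup>+\<omega>. ennreal ((u * u) * (real (N t \<omega>) * real (N t' \<omega>))) \<partial>M)"
proof -
  let ?G = "\<lambda>j. \<Union>i\<in>noise_blocks t t' j. sources i"
  text \<open>The pair of counts is encoded as a single random index.\<close>
  define K where "K \<omega> = prod_encode (N t \<omega>, N t' \<omega>)" for \<omega>
  define F where "F j k \<omega> = (if j = (1::nat) then ennreal (Usum t (fst (prod_decode k)) \<omega>)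
                               else ennreal (Usum t' (snd (prod_decode k)) \<omega>))" for j k \<omega>
  have "(\<integral>\<^sup>+\<omega>. ennreal (Eproc U Yp m t \<omega> * Eproc U Yp m t' \<omega>) \<partial>M)
      = (\<integral>\<^sup>+\<omega>. (\<Prod>j\<in>{1, 2}. F j (K \<omega>) \<omega>) \<partial>M)"
    using t by (intro nn_integral_cong) (simp add: K_def F_def Eproc_eq_Usum Usum_nonneg ennreal_mult)
  also have "\<dots> = (\<Sum>k. emeasure M {\<omega>\<in>space M. K \<omega> = k} * (\<Prod>j\<in>{1, 2}. \<integral>\<^sup>+\<omega>. F j k \<omega> \<partial>M))"
  proof (rule nn_integral_random_index_indep[where G = ?G and N = K and F = F, OF _ _ _ blocks_subset_Pow])
    show "indep_sets (\<lambda>j. sigma_sets (space M) (?G j)) (insert 0 {1, 2})"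
      using t by (intro indep_blocks) (auto simp: noise_blocks_def src_index_def disjoint_family_on_def)
    have [measurable]: "(\<lambda>\<omega>. N s \<omega>) \<in> measurable (sigma (space M) (?G 0)) (count_space UNIV)"
      if "s \<in> {1..T}" for s
      using that by (intro N_measurable_block) (auto simp: noise_blocks_def)
    show "K \<in> measurable (sigma (space M) (?G 0)) (count_space UNIV)"
      using t unfolding K_def by measurable
    show "K \<in> measurable M (count_space UNIV)" "\<And>j k. F j k \<in> borel_measurable M"
      unfolding K_def F_def by measurable
    fix j k assume j: "j \<in> {1::nat, 2}"
    have "Usum t (fst (prod_decode k)) \<in> measurable (sigma (space M) (?G 1)) borel"
      "Usum t' (snd (prod_decode k)) \<in> measurable (sigma (space M) (?G 2)) borel"
      by (intro Usum_measurable_block; simp add: noise_blocks_def)+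
    then show "F j k \<in> measurable (sigma (space M) (?G j)) borel"
      using j unfolding F_def by auto
  qed auto
  also have "\<dots> = (\<Sum>k. emeasure M {\<omega>\<in>space M. K \<omega> = k}
                     * ennreal ((u * u) * (real (fst (prod_decode k)) * real (snd (prod_decode k)))))"
    using nn_integral_Usum t u_pos by (simp add: F_def ennreal_mult[symmetric] mult_ac)
  also have "\<dots> = (\<integral>\<^sup>+\<omega>. ennreal ((u * u) * (real (fst (prod_decode (K \<omega>))) * real (snd (prod_decode (K \<omega>))))) \<partial>M)"
    by (rule nn_integral_nat_valued_fun[symmetric]) (unfold K_def, measurable)
  finally show ?thesis by (simp add: K_def)
qed

lemma Eproc_mean:
  assumes t: "t \<in> {1..T}"
  shows "integrable M (Eproc U Yp m t) \<and> expectation (Eproc U Yp m t) = u * (real m * (th1 * P t))"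
proof -
  have "(\<integral>\<^sup>+\<omega>. ennreal (Eproc U Yp m t \<omega>) \<partial>M)
      = (\<Sum>n. emeasure M {\<omega>\<in>space M. N t \<omega> = n} * ennreal (real n * u))"
    using nn_integral_Eproc[OF t, of "\<lambda>x. x"] t by (simp add: nn_integral_Usum)
  also have "\<dots> = (\<integral>\<^sup>+\<omega>. ennreal (real (N t \<omega>) * u) \<partial>M)"
    by (rule nn_integral_nat_valued_fun[symmetric]) simp
  finally show ?thesis
    using integral_eq_of_nn_integral_eq[of "Eproc U Yp m t" "\<lambda>\<omega>. real (N t \<omega>) * u"] N_mean[OF t] t u_pos
    by (simp add: Eproc_nonneg mult.commute)
qed

lemma Eproc_second_moment:
  assumes t: "t \<in> {1..T}"
  shows "integrable M (\<lambda>\<omega>. (Eproc U Yp m t \<omega>)\<^sup>2) \<and> expectation (\<lambda>\<omega>. (Eproc U Yp m t \<omega>)\<^sup>2)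
    = s2 * (real m * (th1 * P t))
      + (u * u) * ((real m * (on_mom2 r q p00 p10 * P t) + real m * (real m - 1) * ((th1 * P t) * (th1 * P t)))
                   - real m * (th1 * P t))"
proof -
  let ?g = "\<lambda>n::nat. real n * s2 + real n * (real n - 1) * (u * u)"
  have g_eq: "?g n = s2 * real n + (u * u) * ((real n)\<^sup>2 - real n)" for n
    by (simp add: algebra_simps power2_eq_square)
  have g_nonneg: "0 \<le> ?g n" for n
    by (cases n) (auto simp: s2_def intro!: add_nonneg_nonneg mult_nonneg_nonneg)
  have "(\<integral>\<^sup>+\<omega>. ennreal ((Eproc U Yp m t \<omega>)\<^sup>2) \<partial>M)
      = (\<Sum>n. emeasure M {\<omega>\<in>space M. N t \<omega> = n} * ennreal (?g n))"
    using nn_integral_Eproc[OF t, of "\<lambda>x. x\<^sup>2"] t by (simp add: nn_integral_Usum_sq)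
  also have "\<dots> = (\<integral>\<^sup>+\<omega>. ennreal (?g (N t \<omega>)) \<partial>M)"
    by (rule nn_integral_nat_valued_fun[symmetric]) simp
  moreover have "integrable M (\<lambda>\<omega>. ?g (N t \<omega>))"
    unfolding g_eq using N_mean[OF t] N_second_moment[OF t] by simp
  ultimately show ?thesis
    using integral_eq_of_nn_integral_eq[of "\<lambda>\<omega>. (Eproc U Yp m t \<omega>)\<^sup>2" "\<lambda>\<omega>. ?g (N t \<omega>)"] g_nonneg
      N_mean[OF t] N_second_moment[OF t]
    unfolding g_eq by simp
qed

lemma Eproc_cross_moment:
  assumes t: "1 \<le> t'" "t' < t" "t \<le> T"
  shows "integrable M (\<lambda>\<omega>. Eproc U Yp m t \<omega> * Eproc U Yp m t' \<omega>)
    \<and> expectation (\<lambda>\<omega>. Eproc U Yp m t \<omega> * Eproc U Yp m t' \<omega>)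
      = (u * u) * (real m * (th1 * joint_on r q \<nu> p00 p10 t t') + real m * (real m - 1) * ((th1 * P t) * (th1 * P t')))"
  using integral_eq_of_nn_integral_eq[OF _ _ _ _ nn_integral_Eproc_pair] N_cross_moment[OF t] t
  by (simp add: Eproc_nonneg)


definition "eps_blocks t (j::nat) = (if j = 0 then Fluo ` {1..m} \<union> {Unoise s i | s i. 1 \<le> s \<and> 1 \<le> i}
     else {Enoise t})"

lemma Eproc_measurable_block:
  assumes t: "t \<in> {1..T}"
  shows "Eproc U Yp m t \<in> measurable (sigma (space M) (\<Union>i\<in>eps_blocks s 0. sources i)) borel"
proof -
  have [measurable]: "(\<lambda>\<omega>. N t \<omega>) \<in> measurable (sigma (space M) (\<Union>i\<in>eps_blocks s 0. sources i)) (count_space UNIV)"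
    by (rule N_measurable_block) (use t in \<open>auto simp: eps_blocks_def\<close>)
  have Usum: "Usum t n \<in> measurable (sigma (space M) (\<Union>i\<in>eps_blocks s 0. sources i)) borel" for n
    by (rule Usum_measurable_block) (use t in \<open>auto simp: eps_blocks_def\<close>)
  have "(\<lambda>\<omega>. Usum t (N t \<omega>) \<omega>) \<in> measurable (sigma (space M) (\<Union>i\<in>eps_blocks s 0. sources i)) borel"
    by (rule measurable_compose_countable'[where I = UNIV]) (use Usum in auto)
  then show ?thesis by (simp add: Eproc_eq_Usum[abs_def])
qed

lemma eps_integrable: "t \<in> {1..T} \<Longrightarrow> integrable M (eps t)"
  by (rule square_integrable_imp_integrable) (use eps_meas eps_int in auto)

lemma Eproc_eps_moment:
  assumes t: "t \<in> {1..T}" "s \<in> {1..T}"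
  shows "integrable M (\<lambda>\<omega>. Eproc U Yp m t \<omega> * eps s \<omega>) \<and> expectation (\<lambda>\<omega>. Eproc U Yp m t \<omega> * eps s \<omega>) = 0"
proof -
  have "integrable M (\<lambda>\<omega>. Eproc U Yp m t \<omega> * eps s \<omega>) \<and> expectation (\<lambda>\<omega>. Eproc U Yp m t \<omega> * eps s \<omega>)
      = expectation (Eproc U Yp m t) * expectation (eps s)"
  proof (rule indep_sets_integral_mult[of _ "{0, 1}" 0 1])
    show "indep_sets (\<lambda>j. sigma_sets (space M) (\<Union>i\<in>eps_blocks s j. sources i)) {0, 1}"
      using t(2) by (intro indep_blocks) (auto simp: eps_blocks_def src_index_def disjoint_family_on_def)
    show "{Eproc U Yp m t -` A \<inter> space M |A. A \<in> sets borel} \<subseteq> sigma_sets (space M) (\<Union>i\<in>eps_blocks s 0. sources i)"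
      by (rule vimage_sets_subset_sigma_sets[OF Eproc_measurable_block[OF t(1)] blocks_subset_Pow])
    have "eps s \<in> measurable (sigma (space M) (\<Union>i\<in>eps_blocks s 1. sources i)) borel"
      by (rule measurable_block) (use vimage_eps_sources[of s] in \<open>auto simp: eps_blocks_def\<close>)
    then show "{eps s -` A \<inter> space M |A. A \<in> sets borel} \<subseteq> sigma_sets (space M) (\<Union>i\<in>eps_blocks s 1. sources i)"
      by (rule vimage_sets_subset_sigma_sets[OF _ blocks_subset_Pow])
  qed (use Eproc_mean[OF t(1)] eps_integrable[OF t(2)] in auto)
  then show ?thesis using eps_mean t by simp
qed

lemma eps_eps_moment:
  assumes t: "t \<in> {1..T}" "t' \<in> {1..T}" "t \<noteq> t'"
  shows "integrable M (\<lambda>\<omega>. eps t \<omega> * eps t' \<omega>) \<and> expectation (\<lambda>\<omega>. eps t \<omega> * eps t' \<omega>) = 0"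
proof -
  have "integrable M (\<lambda>\<omega>. eps t \<omega> * eps t' \<omega>) \<and> expectation (\<lambda>\<omega>. eps t \<omega> * eps t' \<omega>)
      = expectation (eps t) * expectation (eps t')"
    by (rule indep_sets_integral_mult[OF indep_sources, of "Enoise t" "Enoise t'"])
       (use t vimage_eps_sources eps_integrable in \<open>auto simp: src_index_def\<close>)
  then show ?thesis using eps_mean t by simp
qed

lemma Zproc_eq: "Zproc c u ofs U eps Yp m t = (\<lambda>\<omega>. Eproc U Yp m t \<omega> / u + eps t \<omega> / (c * u))"
  using c_pos u_pos by (auto simp: Zproc_def Ytilde_def field_simps intro!: ext)

definition "mu t = real m * (th1 * P t)"

lemma Z_mean:
  assumes t: "t \<in> {1..T}"
  shows "integrable M (Zproc c u ofs U eps Yp m t) \<and> expectation (Zproc c u ofs U eps Yp m t) = mu t"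
  unfolding Zproc_eq using Eproc_mean[OF t] eps_integrable[OF t] eps_mean[OF t] u_pos
  by (simp add: mu_def)

lemma Z_second_moment:
  assumes t: "t \<in> {1..T}"
  shows "integrable M (\<lambda>\<omega>. (Zproc c u ofs U eps Yp m t \<omega>)\<^sup>2) \<and>
    expectation (\<lambda>\<omega>. (Zproc c u ofs U eps Yp m t \<omega>)\<^sup>2)
     = (s2 * mu t + (u * u) * ((real m * (on_mom2 r q p00 p10 * P t)
          + real m * (real m - 1) * ((th1 * P t) * (th1 * P t))) - mu t)) / (u * u)
       + (\<sigma> t)\<^sup>2 / ((c * u) * (c * u))"
proof -
  have "(\<lambda>\<omega>. (Zproc c u ofs U eps Yp m t \<omega>)\<^sup>2) = (\<lambda>\<omega>. (Eproc U Yp m t \<omega>)\<^sup>2 / (u * u)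
     + (2 / (u * (c * u))) * (Eproc U Yp m t \<omega> * eps t \<omega>) + (eps t \<omega>)\<^sup>2 / ((c * u) * (c * u)))"
    unfolding Zproc_eq using c_pos u_pos by (auto simp: power2_eq_square field_simps intro!: ext)
  moreover have "expectation (\<lambda>\<omega>. (eps t \<omega>)\<^sup>2) = (\<sigma> t)\<^sup>2"
    using eps_var[OF t] eps_mean[OF t] by simp
  ultimately show ?thesis
    using Eproc_second_moment[OF t] Eproc_eps_moment[OF t t] eps_int[OF t] by (simp add: mu_def)
qed

lemma Z_covar:
  assumes t: "1 \<le> t'" "t' < t" "t \<le> T"
  shows "covar M (Zproc c u ofs U eps Yp m t) (Zproc c u ofs U eps Yp m t')
     = (real m * (th1 * joint_on r q \<nu> p00 p10 t t') + real m * (real m - 1) * ((th1 * P t) * (th1 * P t')))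
       - mu t * mu t'"
proof -
  have tt: "t \<in> {1..T}" "t' \<in> {1..T}" "t \<noteq> t'" using t by auto
  have prod_eq: "(\<lambda>\<omega>. Zproc c u ofs U eps Yp m t \<omega> * Zproc c u ofs U eps Yp m t' \<omega>)
     = (\<lambda>\<omega>. (Eproc U Yp m t \<omega> * Eproc U Yp m t' \<omega>) / (u * u) + (Eproc U Yp m t \<omega> * eps t' \<omega>) / (u * (c * u))
        + (Eproc U Yp m t' \<omega> * eps t \<omega>) / (u * (c * u)) + (eps t \<omega> * eps t' \<omega>) / ((c * u) * (c * u)))"
    unfolding Zproc_eq using c_pos u_pos by (auto simp: field_simps intro!: ext)
  note moments = Eproc_cross_moment[OF t] Eproc_eps_moment[OF tt(1,2)] Eproc_eps_moment[OF tt(2,1)]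
    eps_eps_moment[OF tt]
  show ?thesis
    using covar_eq[of "Zproc c u ofs U eps Yp m t" "Zproc c u ofs U eps Yp m t'"] Z_mean[OF tt(1)] Z_mean[OF tt(2)]
      moments u_pos
    unfolding prod_eq by simp
qed

lemma theta3_eq_on_mom2: "th1 * (theta3 r q p00 p10 + 1) = on_mom2 r q p00 p10 / th1 - 1"
  using th1_pos unfolding theta3_def on_mom2_def[symmetric]
  by (simp add: field_simps power2_eq_square)

lemma f2_eq_s2: "variance (U 1 1) / u\<^sup>2 + 1 = s2 / (u * u)"
  using variance_eq[OF U_int] U_mean u_pos by (simp add: s2_def field_simps power2_eq_square)

lemma Z_variance:
  assumes t: "t \<in> {1..T}"
  shows "variance (Zproc c u ofs U eps Yp m t)
     = (1 / real m) * (real m * th1 * (theta3 r q p00 p10 + 1) + real m * (variance (U 1 1) / u\<^sup>2 + 1) - mu t) * mu t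
       + (\<sigma> t)\<^sup>2 / (c * u)\<^sup>2"
proof -
  have "variance (Zproc c u ofs U eps Yp m t)
      = expectation (\<lambda>\<omega>. (Zproc c u ofs U eps Yp m t \<omega>)\<^sup>2) - (expectation (Zproc c u ofs U eps Yp m t))\<^sup>2"
    using Z_mean[OF t] Z_second_moment[OF t] by (intro variance_eq) auto
  also have "\<dots> = (1 / real m) * (real m * th1 * (theta3 r q p00 p10 + 1)
                    + real m * (variance (U 1 1) / u\<^sup>2 + 1) - mu t) * mu t + (\<sigma> t)\<^sup>2 / (c * u)\<^sup>2"
    unfolding Z_mean[OF t, THEN conjunct2] Z_second_moment[OF t, THEN conjunct2] mult.assoc theta3_eq_on_mom2 f2_eq_s2
    using m_pos th1_pos u_pos c_pos by (simp add: mu_def field_simps power2_eq_square)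
  finally show ?thesis .
qed

end

section \<open>Spectral form of the moments\<close>

lemma covariance_identity:
  fixes m th1 A B a0 b0 q0 C P P' :: real and g g1 :: complex
  assumes "m \<noteq> 0" "th1 \<noteq> 0" "th1 * B = b0" "th1 * A = (a0 - b0) * q0"
    and C: "complex_of_real C = of_real P' * (of_real b0 * g1 + of_real (a0 - b0) * of_real q0 * g)"
  shows "complex_of_real (m * (th1 * C) + m * (m - 1) * ((th1 * P) * (th1 * P')) - (m * (th1 * P)) * (m * (th1 * P')))
    = 1 / of_real m * (of_real A * (of_real m * of_real th1 * g) + of_real B * (of_real m * of_real th1 * g1)
        - of_real (m * (th1 * P))) * of_real (m * (th1 * P'))"
proof -
  have A: "A = (a0 - b0) * q0 / th1" and B: "B = b0 / th1"
    using assms by (simp_all add: field_simps)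
  have "complex_of_real (m * (th1 * C) + m * (m - 1) * ((th1 * P) * (th1 * P')) - (m * (th1 * P)) * (m * (th1 * P')))
     = of_real m * of_real th1 * of_real C + of_real m * (of_real m - 1) * ((of_real th1 * of_real P) * (of_real th1 * of_real P'))
       - (of_real m * (of_real th1 * of_real P)) * (of_real m * (of_real th1 * of_real P'))"
    by simp
  also have "\<dots> = 1 / of_real m * (of_real A * (of_real m * of_real th1 * g) + of_real B * (of_real m * of_real th1 * g1)
        - of_real (m * (th1 * P))) * of_real (m * (th1 * P'))"
    unfolding C A B using assms(1,2) by (simp add: field_simps)
  finally show ?thesis .
qed

locale htmm_spectral = htmm_observation + diagonalization r q V Vinv lam
  for V Vinv :: "nat \<Rightarrow> nat \<Rightarrow> complex" and lam :: "nat \<Rightarrow> complex"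
begin

lemma mu_spectral:
  assumes "1 \<le> t"
  shows "complex_of_real (mu t) = mu_of r m th1 (alpha r V Vinv lam q \<nu>) lam t"
proof -
  have "complex_of_real (P t) = (\<Sum>x<r. alpha r V Vinv lam q \<nu> x * lam x ^ (t - 1))"
    using on_prob_diag[OF assms] by (simp add: on_prob_def)
  then show ?thesis by (simp add: mu_def mu_of_def)
qed

lemma Z_moments_spectral:
  assumes t: "t \<in> {1..T}"
  shows "integrable M (\<lambda>\<omega>. (Zproc c u ofs U eps Yp m t \<omega>)\<^sup>2)
    \<and> complex_of_real (expectation (Zproc c u ofs U eps Yp m t)) = mu_of r m th1 (alpha r V Vinv lam q \<nu>) lam t
    \<and> complex_of_real (variance (Zproc c u ofs U eps Yp m t))
      = (1 / of_nat m) * (of_nat m * th1 * (theta3 r q p00 p10 + 1) + of_nat m * (variance (U 1 1) / u\<^sup>2 + 1)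
          - mu_of r m th1 (alpha r V Vinv lam q \<nu>) lam t) * mu_of r m th1 (alpha r V Vinv lam q \<nu>) lam t
        + complex_of_real ((\<sigma> t)\<^sup>2 / (c * u)\<^sup>2)"
proof -
  have \<mu>: "complex_of_real (mu t) = mu_of r m th1 (alpha r V Vinv lam q \<nu>) lam t"
    using t by (intro mu_spectral) simp
  show ?thesis
    using Z_second_moment[OF t] Z_mean[OF t] unfolding Z_variance[OF t] \<mu>[symmetric] by simp
qed

lemma mu0_spectral: "mu_of r m th1 (alpha0 V Vinv lam q) lam k = of_nat m * of_real th1 * spectral0 k"
  by (simp add: mu_of_def spectral0_def)

lemma joint_on_spectral:
  assumes "1 \<le> t'" "t' < t"
  shows "complex_of_real (joint_on r q \<nu> p00 p10 t t')
    = of_real (P t') * (of_real (pmf_mean p10) * spectral0 (t - t' + 1)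
        + of_real (pmf_mean p00 - pmf_mean p10) * of_real (q 0 0) * spectral0 (t - t'))"
proof -
  have "(\<lambda>z. P t' * (Ms q z 0 * pmf_mean (emis p00 p10 z 0)))
      = (\<lambda>z. P t' * (Ms q z 0 * (if z = 0 then pmf_mean p00 else pmf_mean p10)))"
    by (auto simp: emis_def)
  then show ?thesis
    using Mpow_emission_diag[of "t - t'" "P t'" "pmf_mean p00" "pmf_mean p10"] assms q00_nonzero
    by (simp add: joint_on_def field_simps)
qed

lemma theta1_split: "th1 = q 0 0 * pmf_mean p00 + (1 - q 0 0) * pmf_mean p10"
proof -
  have "(\<Sum>i<r. q (Suc i) 0) = 1 - q 0 0"
    using q_sum[of 0] by (simp add: sum.atMost_shift)
  moreover have "th1 = (\<Sum>x\<le>r. q x 0 * (if x = 0 then pmf_mean p00 else pmf_mean p10))"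
    unfolding theta1_def by (intro sum.cong refl) (auto simp: Ms_def emis_def)
  then have "th1 = q 0 0 * pmf_mean p00 + (\<Sum>i<r. q (Suc i) 0) * pmf_mean p10"
    by (simp add: sum.atMost_shift sum_distrib_right)
  ultimately show ?thesis by simp
qed

text \<open>The two coefficients of the covariance formula, multiplied by \<open>\<theta>\<^sub>1\<close>, are the
  conditional means in the two emission regimes.\<close>

lemma theta2_coefficients:
  shows "th1 * ((1 - theta2 r q p00 p10) / (1 - q 0 0)) = pmf_mean p10"
    and "th1 * (theta2 r q p00 p10 - q 0 0 * (1 - theta2 r q p00 p10) / (1 - q 0 0))
       = (pmf_mean p00 - pmf_mean p10) * q 0 0"
proof -
  have th2: "th1 * theta2 r q p00 p10 = q 0 0 * pmf_mean p00"
    using th1_pos by (simp add: theta2_def emis_def)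
  then have "th1 * (1 - theta2 r q p00 p10) = (1 - q 0 0) * pmf_mean p10"
    using theta1_split by (simp add: right_diff_distrib)
  then show b: "th1 * ((1 - theta2 r q p00 p10) / (1 - q 0 0)) = pmf_mean p10"
    using q00 by (simp add: field_simps)
  show "th1 * (theta2 r q p00 p10 - q 0 0 * (1 - theta2 r q p00 p10) / (1 - q 0 0))
      = (pmf_mean p00 - pmf_mean p10) * q 0 0"
  proof -
    have "th1 * (theta2 r q p00 p10 - q 0 0 * (1 - theta2 r q p00 p10) / (1 - q 0 0))
        = th1 * theta2 r q p00 p10 - q 0 0 * (th1 * ((1 - theta2 r q p00 p10) / (1 - q 0 0)))"
      by (simp add: algebra_simps)
    also have "\<dots> = q 0 0 * pmf_mean p00 - q 0 0 * pmf_mean p10"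
      by (simp only: th2 b)
    finally show ?thesis by (simp add: algebra_simps)
  qed
qed

lemma Z_covar_spectral:
  assumes t: "1 \<le> t'" "t' < t" "t \<le> T"
  shows "complex_of_real (covar M (Zproc c u ofs U eps Yp m t) (Zproc c u ofs U eps Yp m t'))
    = 1 / of_nat m *
       (complex_of_real (theta2 r q p00 p10 - q 0 0 * (1 - theta2 r q p00 p10) / (1 - q 0 0))
          * mu_of r m th1 (alpha0 V Vinv lam q) lam (t - t')
        + complex_of_real ((1 - theta2 r q p00 p10) / (1 - q 0 0))
          * mu_of r m th1 (alpha0 V Vinv lam q) lam (t - t' + 1)
        - mu_of r m th1 (alpha r V Vinv lam q \<nu>) lam t) * mu_of r m th1 (alpha r V Vinv lam q \<nu>) lam t'"
proof -
  have "complex_of_real (covar M (Zproc c u ofs U eps Yp m t) (Zproc c u ofs U eps Yp m t'))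
     = complex_of_real (real m * (th1 * joint_on r q \<nu> p00 p10 t t')
         + real m * (real m - 1) * ((th1 * P t) * (th1 * P t')) - (real m * (th1 * P t)) * (real m * (th1 * P t')))"
    using Z_covar[OF t] by (simp add: mu_def)
  also have "\<dots> = 1 / of_real (real m) *
       (of_real (theta2 r q p00 p10 - q 0 0 * (1 - theta2 r q p00 p10) / (1 - q 0 0))
          * (of_real (real m) * of_real th1 * spectral0 (t - t'))
        + of_real ((1 - theta2 r q p00 p10) / (1 - q 0 0)) * (of_real (real m) * of_real th1 * spectral0 (t - t' + 1))
        - of_real (real m * (th1 * P t))) * of_real (real m * (th1 * P t'))"
    using m_pos th1_pos theta2_coefficients joint_on_spectral[OF t(1,2)]
    by (intro covariance_identity) auto
  also have "\<dots> = 1 / of_nat m *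
       (complex_of_real (theta2 r q p00 p10 - q 0 0 * (1 - theta2 r q p00 p10) / (1 - q 0 0))
          * mu_of r m th1 (alpha0 V Vinv lam q) lam (t - t')
        + complex_of_real ((1 - theta2 r q p00 p10) / (1 - q 0 0))
          * mu_of r m th1 (alpha0 V Vinv lam q) lam (t - t' + 1)
        - mu_of r m th1 (alpha r V Vinv lam q \<nu>) lam t) * mu_of r m th1 (alpha r V Vinv lam q \<nu>) lam t'"
    using t mu_spectral[of t] mu_spectral[of t'] by (simp add: mu0_spectral mu_def)
  finally show ?thesis .
qed

end

theorem mainTheorem8:
  fixes M :: "'a measure"
    and r T m :: nat
    and q :: "nat \<Rightarrow> nat \<Rightarrow> real"
    and \<nu> :: "nat \<Rightarrow> real"
    and p00 p10 :: "nat pmf"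
    and V Vinv :: "nat \<Rightarrow> nat \<Rightarrow> complex"
    and lam :: "nat \<Rightarrow> complex"
    and X Xp Yp :: "nat \<Rightarrow> nat \<Rightarrow> 'a \<Rightarrow> nat"
    and U :: "nat \<Rightarrow> nat \<Rightarrow> 'a \<Rightarrow> real"
    and eps :: "nat \<Rightarrow> 'a \<Rightarrow> real"
    and \<sigma> :: "nat \<Rightarrow> real"
    and u c ofs :: real
  assumes "prob_space M"
    and "1 \<le> r" and "1 \<le> T" and "1 \<le> m"
    and q_range: "\<And>x z. x \<le> r \<Longrightarrow> z \<le> r - 1 \<Longrightarrow> 0 \<le> q x z \<and> q x z \<le> 1"
    and q_sum: "\<And>z. z \<le> r - 1 \<Longrightarrow> (\<Sum>x\<le>r. q x z) = 1"
    and nu_nonneg: "\<And>z. z \<le> r \<Longrightarrow> 0 \<le> \<nu> z"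
    and nu_sum: "(\<Sum>z\<le>r. \<nu> z) = 1"
    and q00: "0 < q 0 0" "q 0 0 < 1"
    and th1_pos: "0 < theta1 r q p00 p10"
    and mgf: "mgf_finite_near0 p00" "mgf_finite_near0 p10"
    and V_inv1: "\<And>i j. i \<le> r \<Longrightarrow> j \<le> r \<Longrightarrow> (\<Sum>k\<le>r. V i k * Vinv k j) = (if i = j then 1 else 0)"
    and V_inv2: "\<And>i j. i \<le> r \<Longrightarrow> j \<le> r \<Longrightarrow> (\<Sum>k\<le>r. Vinv i k * V k j) = (if i = j then 1 else 0)"
    and diag: "\<And>x z. x \<le> r \<Longrightarrow> z \<le> r \<Longrightarrow>
                 complex_of_real (Mmat r q x z) = (\<Sum>y\<le>r. V x y * lam y * Vinv y z)"
    and lam_r: "lam r = 1"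
    and V_col_r: "\<And>x. x \<le> r \<Longrightarrow> V x r = (if x = r then 1 else 0)"
    and X_meas: "\<And>k t. X k t \<in> measurable M (count_space UNIV)"
    and Xp_meas: "\<And>k t. Xp k t \<in> measurable M (count_space UNIV)"
    and Yp_meas: "\<And>k t. Yp k t \<in> measurable M (count_space UNIV)"
    and law: "\<And>k xs xps ys. k \<in> {1..m} \<Longrightarrow> (\<forall>t\<le>T. xs t \<le> r) \<Longrightarrow> (\<forall>t\<in>{1..T}. xps t \<le> r) \<Longrightarrow>
       measure M {\<omega> \<in> space M. \<forall>t\<le>T. X k t \<omega> = xs t \<and>
                      (1 \<le> t \<longrightarrow> Xp k t \<omega> = xps t \<and> Yp k t \<omega> = ys t)}
       = \<nu> (xs 0) * (\<Prod>t\<in>{1..T}. Ml r q (xps t) (xs (t - 1)) * Ms q (xs t) (xps t)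
                                 * pmf (emis p00 p10 (xs t) (xps t)) (ys t))"
    and U_meas: "\<And>t k. U t k \<in> borel_measurable M"
    and U_nonneg: "\<And>t k \<omega>. 1 \<le> t \<Longrightarrow> 1 \<le> k \<Longrightarrow> \<omega> \<in> space M \<Longrightarrow> 0 \<le> U t k \<omega>"
    and U_ident: "\<And>t k. 1 \<le> t \<Longrightarrow> 1 \<le> k \<Longrightarrow> distr M borel (U t k) = distr M borel (U 1 1)"
    and U_int: "integrable M (U 1 1)" "integrable M (\<lambda>\<omega>. (U 1 1 \<omega>)\<^sup>2)"
    and U_mean: "integral\<^sup>L M (U 1 1) = u" and u_pos: "0 < u"
    and eps_meas: "\<And>t. eps t \<in> borel_measurable M"
    and eps_int: "\<And>t. t \<in> {1..T} \<Longrightarrow> integrable M (\<lambda>\<omega>. (eps t \<omega>)\<^sup>2)"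
    and eps_mean: "\<And>t. t \<in> {1..T} \<Longrightarrow> integral\<^sup>L M (eps t) = 0"
    and eps_var: "\<And>t. t \<in> {1..T} \<Longrightarrow> prob_space.variance M (eps t) = (\<sigma> t)\<^sup>2"
    and indep: "prob_space.indep_sets M (src_sigma M T X Xp Yp U eps) (src_index m T)"
    and c_pos: "0 < c"
  shows
    "let a = c * u;
         f2 = prob_space.variance M (U 1 1) / u\<^sup>2 + 1;
         th1 = theta1 r q p00 p10; th2 = theta2 r q p00 p10; th3 = theta3 r q p00 p10;
         \<mu> = mu_of r m th1 (alpha r V Vinv lam q \<nu>) lam;
         \<mu>0 = mu_of r m th1 (alpha0 V Vinv lam q) lam;
         Z = Zproc c u ofs U eps Yp m
     in (\<forall>t\<in>{1..T}.
            integrable M (\<lambda>\<omega>. (Z t \<omega>)\<^sup>2)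
          \<and> complex_of_real (integral\<^sup>L M (Z t)) = \<mu> t
          \<and> complex_of_real (prob_space.variance M (Z t))
              = (1 / of_nat m) * (of_nat m * th1 * (th3 + 1) + of_nat m * f2 - \<mu> t) * \<mu> t
                + complex_of_real ((\<sigma> t)\<^sup>2 / a\<^sup>2))
      \<and> (\<forall>t t'. 1 \<le> t' \<and> t' < t \<and> t \<le> T \<longrightarrow>
            complex_of_real (covar M (Z t) (Z t'))
              = (1 / of_nat m) *
                 ((complex_of_real (th2 - q 0 0 * (1 - th2) / (1 - q 0 0))) * \<mu>0 (t - t')
                  + complex_of_real ((1 - th2) / (1 - q 0 0)) * \<mu>0 (t - t' + 1)
                  - \<mu> t) * \<mu> t')"
proof -
  interpret htmm_spectral M r T m q \<nu> p00 p10 X Xp Yp U eps \<sigma> u c ofs V Vinv lam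
    by (intro htmm_spectral.intro htmm_observation.intro htmm_observation_axioms.intro diagonalization.intro;
        (fact assms | use q00 in simp))
  show ?thesis
    unfolding Let_def using Z_moments_spectral Z_covar_spectral by auto
qed

end
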